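(* Let the sequences be generated by Algorithm iMBA and suppose Assumptions 2, 3 and 4 hold. Let $\varpi^*:=\lim_{k\to\infty}F(x^k)$ (which exists). Then every cluster point of $\{x^k\}$ is a stationary point of (P), i.e. $\omega(x^0)\subset\Gamma^*$, and $F(x)=\varpi^*$ for all $x\in\omega(x^0)$.
   Context: Problem (P): $\min_{x\in\mathbb{R}^n}F(x):=g_0(x)+\delta_{\mathbb{R}^m_-}(g(x))+\phi(x)$, where $g=(g_1,\dots,g_m)^\top$ and $\delta_{\mathbb{R}^m_-}$ is the indicator of the nonpositive orthant. Assumption 1 (standing): (i) $g_0:\mathbb{R}^n\to(-\infty,\infty]$ is locally Lipschitz and upper-$\mathcal C^2$ at every point of an open convex set $\mathcal O\supset\Gamma:=\{x:g(x)\in\mathbb{R}^m_-\}\neq\emptyset$, and each $g_i:\mathbb{R}^n\to\mathbb{R}$, $i\in[m]$, is locally Lipschitz and upper-$\mathcal C^2$ at every point of $\mathbb{R}^n$; (ii) $\phi:\mathbb{R}^n\to\mathbb{R}$ is convex and $F$ is bounded below on $\Gamma$. $\partial$ denotes the limiting subdifferential; $\partial g(x):=\{V\in\mathbb{R}^{n\times m}: V_i\in\partial g_i(x)\ \forall i\}$. A point $x\in\Gamma$ is stationary for (P) if $0\in\partial g_0(x)+\partial\phi(x)+\bigcup_{\zeta\in\mathcal N_{\mathbb{R}^m_-}(g(x))}\sum_{i=1}^m\zeta_i\partial g_i(x)$; $\Gamma^*$ is the set of stationary points. Define $G(x,s,V,L):=g(s)+V^\top(x-s)+\tfrac12\|x-s\|^2L$.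 Algorithm iMBA (parameters $0<\mu_{\min}\le\mu_{\max}$, $0<L_{\min}\le L_{\max}$, $M,\beta_C,\beta_S,\alpha>0$, $\tau>1$, $x^0\in\Gamma$): at iteration $k$ choose $\xi^k\in\partial g_0(x^k)$, $V^k\in\partial g(x^k)$, $\mu_{k,0}\in[\mu_{\min},\mu_{\max}]$, $L^{k,0}\in[L_{\min},L_{\max}]^m$; for $j=0,1,\dots$ choose self-adjoint $\mathcal Q_{k,j}$ with $\mu_{k,j}\mathcal I\preceq\mathcal Q_{k,j}\preceq(\mu_{k,j}+M)\mathcal I$, let $F_{k,j}(x):=g_0(x^k)+\langle\xi^k,x-x^k\rangle+\frac12\langle x-x^k,\mathcal Q_{k,j}(x-x^k)\rangle+\phi(x)$, $\Gamma_{k,j}:=\{x:G(x,x^k,V^k,L^{k,j})\in\mathbb{R}^m_-\}$, $\overline x^{k,j}$ the unique minimizer of $F_{k,j}$ on $\Gamma_{k,j}$, and compute $y^{k,j}$, $v^{k,j}\in\partial\phi(y^{k,j})$, $\lambda^{k,j}\in\mathbb{R}^m_+$ with $F_{k,j}(y^{k,j})\le F_{k,j}(x^k)$, $(-\langle\lambda^{k,j},G(y^{k,j},x^k,V^k,L^{k,j})\rangle)_++\|[G(y^{k,j},x^k,V^k,L^{k,j})]_+\|_\infty\le\frac{\beta_C}2\|y^{k,j}-x^k\|^2$ and $\|\xi^k+\mathcal Q_{k,j}(y^{k,j}-x^k)+v^{k,j}+V^k\lambda^{k,j}+\langle L^{k,j},\lambda^{k,j}\rangle(y^{k,j}-x^k)\|\le\beta_S\|y^{k,j}-x^k\|$.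 If $g(y^{k,j})\in\mathbb{R}^m_-$ and $F(y^{k,j})\le F(x^k)-\frac\alpha2\|y^{k,j}-x^k\|^2$, accept ($j_k:=j$); else if $g(y^{k,j})\notin\mathbb{R}^m_-$ set $L^{k,j+1}=\tau L^{k,j}$, $\mu_{k,j+1}=\mu_{k,j}$; else $L^{k,j+1}=L^{k,j}$, $\mu_{k,j+1}=\tau\mu_{k,j}$. Then $x^{k+1}:=y^{k,j_k}$, $(\mu_k,\mathcal Q_k,L^k,v^{k+1},\lambda^{k+1}):=(\mu_{k,j_k},\mathcal Q_{k,j_k},L^{k,j_k},v^{k,j_k},\lambda^{k,j_k})$, $\overline x^k:=\overline x^{k,j_k}$. Assumption 2: for each $k,j$, the multifunction $x\mapsto G(x,x^k,V^k,L^{k,j})-\mathbb{R}^m_-$ is metrically subregular at $(\overline x^{k,j},0)$. Assumption 3: $\{x^k\}$ is bounded; $\omega(x^0)$ denotes its set of cluster points. Parametric data: $\mathbb U:=\mathbb{R}^n\times\mathbb{R}^m_+\times\mathbb{R}^{n\times m}\times\mathbb{R}^n\times\mathbb S_+$ ($\mathbb S_+$ = positive semidefinite self-adjoint linear maps on $\mathbb{R}^n$); for $u=(s,L,V,\xi,\mathcal Q)$: $H(u,x):=G(x,s,V,L)$, so $\nabla_xH(u,x)\lambda=V\lambda+\langle L,\lambda\rangle(x-s)$; $\mathcal S(u):=\{x:H(u,x)\in\mathbb{R}^m_-\}$; $\Lambda(u,x,y):=\{\lambda\in\mathcal N_{\mathbb{R}^m_-}(H(u,x)):\nabla_xH(u,x)\lambda=y\}$.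 The partial bounded multiplier property (BMP) w.r.t. $x$ holds at $(u^*,x^* )$ with $x^*\in\mathcal S(u^* )$ if there exist $\kappa>0$ and a neighborhood $\mathcal U\times\mathcal V$ of $(u^*,x^* )$ such that for all $u\in\mathcal U$, $x\in\mathcal V\cap\mathcal S(u)$ and $y\in\mathcal N_{\mathcal S(u)}(x)$, $\Lambda(u,x,y)\cap\{\lambda:\|\lambda\|\le\kappa\|y\|\}\neq\emptyset$. Let $u^k:=(x^k,L^k,V^k,\xi^k,\mathcal Q_k)$. Assumption 4: the partial BMP w.r.t. $x$ holds at every cluster point of $\{(u^k,\overline x^k)\}_{k\in\mathbb{N}}$. *)

theory Defs
  imports "HOL-Analysis.Analysis"
begin

definition frechet_subdiff :: "('a::real_inner \<Rightarrow> real) \<Rightarrow> 'a \<Rightarrow> 'a set" where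
  "frechet_subdiff f x =
     {v. \<forall>\<epsilon>>0. \<exists>\<delta>>0. \<forall>y. norm (y - x) < \<delta> \<longrightarrow>
            f x + v \<bullet> (y - x) - \<epsilon> * norm (y - x) \<le> f y}"

definition limiting_subdiff :: "('a::real_inner \<Rightarrow> real) \<Rightarrow> 'a \<Rightarrow> 'a set" where
  "limiting_subdiff f x =
     {v. \<exists>xs vs. xs \<longlonglongrightarrow> x \<and> (\<lambda>k. f (xs k)) \<longlonglongrightarrow> f x \<and>
                 (\<forall>k. vs k \<in> frechet_subdiff f (xs k)) \<and> vs \<longlonglongrightarrow> v}"

definition regular_normal_cone :: "'a::real_inner set \<Rightarrow> 'a \<Rightarrow> 'a set" where
  "regular_normal_cone C x =
     (if x \<in> C then {v. \<forall>\<epsilon>>0. \<exists>\<delta>>0. \<forall>y\<in>C. norm (y - x) < \<delta> \<longrightarrow>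
                          v \<bullet> (y - x) \<le> \<epsilon> * norm (y - x)}
      else {})"

definition normal_cone :: "'a::real_inner set \<Rightarrow> 'a \<Rightarrow> 'a set" where
  "normal_cone C x =
     (if x \<in> C then {v. \<exists>xs vs. (\<forall>k. xs k \<in> C \<and> vs k \<in> regular_normal_cone C (xs k)) \<and>
                              xs \<longlonglongrightarrow> x \<and> vs \<longlonglongrightarrow> v}
      else {})"

definition nonpos_orthant :: "(real^'m::finite) set" where
  "nonpos_orthant = {z. \<forall>i. z $ i \<le> 0}"

definition loc_lipschitz_at :: "('a::metric_space \<Rightarrow> real) \<Rightarrow> 'a \<Rightarrow> bool" where
  "loc_lipschitz_at f x = (\<exists>\<delta>>0. \<exists>K. lipschitz_on K (ball x \<delta>) f)"

text \<open>Upper-C2 at a point (semiconcavity characterisation, cf. Rockafellar--Wets Thm 10.33):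
  on a neighbourhood of x, f minus a multiple of the squared norm is concave.\<close>
definition upper_C2_at :: "('a::real_normed_vector \<Rightarrow> real) \<Rightarrow> 'a \<Rightarrow> bool" where
  "upper_C2_at f x = (\<exists>\<delta>>0. \<exists>\<rho>\<ge>0. convex_on (ball x \<delta>) (\<lambda>y. \<rho> / 2 * (norm y)\<^sup>2 - f y))"

definition metric_subregular :: "('a::metric_space \<Rightarrow> 'b::metric_space set) \<Rightarrow> 'a \<Rightarrow> 'b \<Rightarrow> bool" where
  "metric_subregular \<Phi> xb yb =
     (yb \<in> \<Phi> xb \<and> (\<exists>\<kappa>>0. \<exists>\<delta>>0. \<forall>x\<in>ball xb \<delta>. infdist x {z. yb \<in> \<Phi> z} \<le> \<kappa> * infdist yb (\<Phi> x)))"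

definition cluster_point :: "(nat \<Rightarrow> 'a::topological_space) \<Rightarrow> 'a \<Rightarrow> bool" where
  "cluster_point z p = (\<exists>r. strict_mono r \<and> (z \<circ> r) \<longlonglongrightarrow> p)"

definition feasible :: "(real^'n \<Rightarrow> real^'m::finite) \<Rightarrow> (real^'n) set" where
  "feasible g = {x. g x \<in> nonpos_orthant}"

definition Fobj :: "(real^'n \<Rightarrow> real) \<Rightarrow> (real^'n \<Rightarrow> real^'m::finite) \<Rightarrow> (real^'n \<Rightarrow> real) \<Rightarrow> real^'n \<Rightarrow> ereal" where
  "Fobj g0 g \<phi> x = (if g x \<in> nonpos_orthant then ereal (g0 x + \<phi> x) else \<infinity>)"

definition subdiff_vec :: "(real^'n \<Rightarrow> real^'m::finite) \<Rightarrow> real^'n \<Rightarrow> (real^'m^'n) set" where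
  "subdiff_vec g x = {V. \<forall>i. column i V \<in> limiting_subdiff (\<lambda>z. g z $ i) x}"

definition stationary :: "(real^'n \<Rightarrow> real) \<Rightarrow> (real^'n \<Rightarrow> real^'m::finite) \<Rightarrow> (real^'n \<Rightarrow> real) \<Rightarrow> real^'n \<Rightarrow> bool" where
  "stationary g0 g \<phi> x =
     (x \<in> feasible g \<and>
      (\<exists>\<xi>\<in>limiting_subdiff g0 x. \<exists>v\<in>limiting_subdiff \<phi> x. \<exists>\<zeta>\<in>normal_cone nonpos_orthant (g x).
         \<exists>w. (\<forall>i. w i \<in> limiting_subdiff (\<lambda>z. g z $ i) x) \<and>
             \<xi> + v + (\<Sum>i\<in>UNIV. \<zeta> $ i *\<^sub>R w i) = 0))"

definition Gfun :: "(real^'n \<Rightarrow> real^'m::finite) \<Rightarrow> real^'n \<Rightarrow> real^'n \<Rightarrow> real^'m^'n \<Rightarrow> real^'m \<Rightarrow> real^'m" where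
  "Gfun g x s V L = g s + transpose V *v (x - s) + ((norm (x - s))\<^sup>2 / 2) *\<^sub>R L"

definition Fmodel :: "(real^'n \<Rightarrow> real) \<Rightarrow> (real^'n \<Rightarrow> real) \<Rightarrow> real^'n \<Rightarrow> real^'n \<Rightarrow> real^'n^'n \<Rightarrow> real^'n \<Rightarrow> real" where
  "Fmodel g0 \<phi> xk \<xi> Q x = g0 xk + \<xi> \<bullet> (x - xk) + 1/2 * ((x - xk) \<bullet> (Q *v (x - xk))) + \<phi> x"

type_synonym ('n, 'm) param = "(real^'n) \<times> (real^'m) \<times> (real^'m^'n) \<times> (real^'n) \<times> (real^'n^'n)"

definition in_U :: "('n::finite, 'm::finite) param \<Rightarrow> bool" where
  "in_U u = (case u of (s, L, V, \<xi>, Q) \<Rightarrow>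
     (\<forall>i. 0 \<le> L $ i) \<and> transpose Q = Q \<and> (\<forall>d. 0 \<le> d \<bullet> (Q *v d)))"

definition Hfun :: "(real^'n \<Rightarrow> real^'m::finite) \<Rightarrow> ('n::finite, 'm) param \<Rightarrow> real^'n \<Rightarrow> real^'m" where
  "Hfun g u x = (case u of (s, L, V, \<xi>, Q) \<Rightarrow> Gfun g x s V L)"

definition Sset :: "(real^'n \<Rightarrow> real^'m::finite) \<Rightarrow> ('n::finite, 'm) param \<Rightarrow> (real^'n) set" where
  "Sset g u = {x. Hfun g u x \<in> nonpos_orthant}"

definition gradH :: "('n::finite, 'm::finite) param \<Rightarrow> real^'n \<Rightarrow> real^'m \<Rightarrow> real^'n" where
  "gradH u x lam = (case u of (s, L, V, \<xi>, Q) \<Rightarrow> V *v lam + (L \<bullet> lam) *\<^sub>R (x - s))"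

definition Lambda_set :: "(real^'n \<Rightarrow> real^'m::finite) \<Rightarrow> ('n::finite, 'm) param \<Rightarrow> real^'n \<Rightarrow> real^'n \<Rightarrow> (real^'m) set" where
  "Lambda_set g u x y = {lam \<in> normal_cone nonpos_orthant (Hfun g u x). gradH u x lam = y}"

definition partial_BMP :: "(real^'n \<Rightarrow> real^'m::finite) \<Rightarrow> ('n::finite, 'm) param \<Rightarrow> real^'n \<Rightarrow> bool" where
  "partial_BMP g us xs =
     (xs \<in> Sset g us \<and>
      (\<exists>\<kappa>>0. \<exists>UU VV. open UU \<and> us \<in> UU \<and> open VV \<and> xs \<in> VV \<and>
         (\<forall>u\<in>UU. in_U u \<longrightarrow> (\<forall>x\<in>VV \<inter> Sset g u. \<forall>y\<in>normal_cone (Sset g u) x.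
             \<exists>lam\<in>Lambda_set g u x y. norm lam \<le> \<kappa> * norm y))))"

end

theory Submission
  imports Defs
begin

section \<open>Subgradients of convex and upper-\<open>C\<^sup>2\<close> functions\<close>

lemma small_step_exists:
  fixes a \<delta> :: real
  assumes "0 \<le> a" "0 < \<delta>"
  obtains t where "0 < t" "t \<le> 1" "t * a < \<delta>"
proof
  define t where "t = min 1 (\<delta> / (a + 1))"
  show "0 < t" "t \<le> 1" using assms by (auto simp: t_def)
  have "t * a < t * (a + 1)" using \<open>0 < t\<close> by simp
  also have "\<dots> \<le> \<delta> / (a + 1) * (a + 1)"
    using assms by (intro mult_right_mono) (auto simp: t_def)
  finally show "t * a < \<delta>" using assms by simp
qed


lemma convex_on_extrapolate:
  fixes h :: "'a::real_vector \<Rightarrow> real"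
  assumes cvx: "convex_on B h" and w: "z - t *\<^sub>R (y - z) \<in> B" and y: "y \<in> B" and t: "0 \<le> t"
  shows "(1 + t) * h z \<le> h (z - t *\<^sub>R (y - z)) + t * h y"
proof -
  define w where "w = z - t *\<^sub>R (y - z)"
  define \<theta> where "\<theta> = t / (1 + t)"
  have \<theta>: "0 \<le> \<theta>" "\<theta> \<le> 1" "(1 - \<theta>) * (1 + t) = 1" "\<theta> * (1 + t) = t"
    using t by (auto simp: \<theta>_def field_simps)
  have "(1 - \<theta>) *\<^sub>R w + \<theta> *\<^sub>R y = ((1 - \<theta>) * (1 + t)) *\<^sub>R z + (\<theta> * (1 + t) - t) *\<^sub>R y"
    by (simp add: w_def algebra_simps)
  hence eq: "(1 - \<theta>) *\<^sub>R w + \<theta> *\<^sub>R y = z"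
    using \<theta> by simp
  have "w \<in> B" using w by (simp add: w_def)
  from convex_onD[OF cvx \<theta>(1,2) this y]
  have "h z \<le> (1 - \<theta>) * h w + \<theta> * h y"
    by (simp only: eq)
  hence "(1 + t) * h z \<le> (1 + t) * ((1 - \<theta>) * h w + \<theta> * h y)"
    using t by (intro mult_left_mono) auto
  also have "\<dots> = ((1 - \<theta>) * (1 + t)) * h w + (\<theta> * (1 + t)) * h y"
    by (simp add: algebra_simps)
  finally show ?thesis
    using \<theta> by (simp add: w_def)
qed

lemma convex_on_frechet_supergradient_le:
  fixes h :: "'a::real_inner \<Rightarrow> real"
  assumes cvx: "convex_on B h" and B: "open B" and z: "z \<in> B" and y: "y \<in> B"
    and super: "\<And>\<epsilon>. \<epsilon> > 0 \<Longrightarrow>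
                  \<exists>\<delta>>0. \<forall>w. norm (w - z) < \<delta> \<longrightarrow> h w \<le> h z + s \<bullet> (w - z) + \<epsilon> * norm (w - z)"
  shows "h z + s \<bullet> (y - z) \<le> h y"
proof -
  define d where "d = y - z"
  have le: "h z + s \<bullet> d \<le> h y + \<epsilon> * norm d" if \<epsilon>: "\<epsilon> > 0" for \<epsilon>
  proof -
    obtain \<delta> where \<delta>: "\<delta> > 0"
      and near: "\<And>w. norm (w - z) < \<delta> \<Longrightarrow> h w \<le> h z + s \<bullet> (w - z) + \<epsilon> * norm (w - z)"
      using super[OF \<epsilon>] by blast
    obtain \<delta>' where \<delta>': "\<delta>' > 0" "ball z \<delta>' \<subseteq> B"
      using B z openE by blast
    have "0 < min \<delta> \<delta>'" using \<delta> \<delta>' by simp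
    then obtain t where t: "0 < t" "t \<le> 1" "t * norm d < min \<delta> \<delta>'"
      using small_step_exists[OF norm_ge_zero] by blast
    have wz: "norm ((z - t *\<^sub>R d) - z) = t * norm d"
      using t by simp
    have "z - t *\<^sub>R d \<in> B"
      using wz t \<delta>'(2) by (auto simp: dist_norm norm_minus_commute)
    hence "(1 + t) * h z \<le> h (z - t *\<^sub>R d) + t * h y"
      using convex_on_extrapolate[OF cvx _ y, of z t] t by (simp add: d_def)
    moreover have "h (z - t *\<^sub>R d) \<le> h z - t * (s \<bullet> d) + \<epsilon> * (t * norm d)"
      using near[of "z - t *\<^sub>R d"] wz t by simp
    ultimately have "t * (h z + s \<bullet> d) \<le> t * (h y + \<epsilon> * norm d)"
      by (simp add: algebra_simps)
    thus ?thesis using t by simp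
  qed
  have "h z + s \<bullet> d \<le> h y + e" if e: "e > 0" for e
  proof (cases "d = 0")
    case True
    thus ?thesis using le[of 1] e by simp
  next
    case False
    thus ?thesis using le[of "e / norm d"] e by simp
  qed
  thus ?thesis unfolding d_def by (rule field_le_epsilon)
qed

lemma upper_C2_frechet_subdiff_le:
  fixes f :: "'a::real_inner \<Rightarrow> real"
  assumes cvx: "convex_on B (\<lambda>y. \<rho> / 2 * (norm y)\<^sup>2 - f y)" and B: "open B" and \<rho>: "0 \<le> \<rho>"
    and z: "z \<in> B" and y: "y \<in> B" and v: "v \<in> frechet_subdiff f z"
  shows "f y \<le> f z + v \<bullet> (y - z) + \<rho> / 2 * (norm (y - z))\<^sup>2"
proof -
  define h where "h y = \<rho> / 2 * (norm y)\<^sup>2 - f y" for y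
  have h_diff: "h w - h z - (\<rho> *\<^sub>R z - v) \<bullet> (w - z)
      = \<rho> / 2 * (norm (w - z))\<^sup>2 - (f w - f z - v \<bullet> (w - z))" for w
  proof -
    have e: "(norm (w - z))\<^sup>2 = (norm w)\<^sup>2 + (norm z)\<^sup>2 - 2 * (z \<bullet> w)"
      by (simp add: power2_norm_eq_inner inner_diff_left inner_diff_right inner_commute)
    show ?thesis
      unfolding h_def e by (simp add: inner_diff_left inner_diff_right dot_square_norm algebra_simps)
  qed
  \<comment> \<open>\<open>\<rho> z - v\<close> is a Frechet supergradient of the convex function \<open>h\<close>\<close>
  have "h z + (\<rho> *\<^sub>R z - v) \<bullet> (y - z) \<le> h y"
  proof (rule convex_on_frechet_supergradient_le[OF cvx[folded h_def] B z y])
    fix \<epsilon> :: real assume \<epsilon>: "\<epsilon> > 0"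
    have "\<epsilon> / 2 > 0" using \<epsilon> by simp
    then obtain \<delta> where \<delta>: "\<delta> > 0"
      and fr: "\<And>w. norm (w - z) < \<delta> \<Longrightarrow> f z + v \<bullet> (w - z) - \<epsilon> / 2 * norm (w - z) \<le> f w"
      using v unfolding frechet_subdiff_def by blast
    show "\<exists>\<delta>>0. \<forall>w. norm (w - z) < \<delta> \<longrightarrow> h w \<le> h z + (\<rho> *\<^sub>R z - v) \<bullet> (w - z) + \<epsilon> * norm (w - z)"
    proof (intro exI[of _ "min \<delta> (\<epsilon> / (\<rho> + 1))"] conjI allI impI)
      show "0 < min \<delta> (\<epsilon> / (\<rho> + 1))" using \<delta> \<epsilon> \<rho> by simp
      fix w assume w: "norm (w - z) < min \<delta> (\<epsilon> / (\<rho> + 1))"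
      have "\<rho> * norm (w - z) \<le> \<epsilon>"
      proof -
        have "norm (w - z) + \<rho> * norm (w - z) < \<epsilon>"
          using w \<rho> by (simp add: pos_less_divide_eq algebra_simps)
        thus ?thesis using norm_ge_zero[of "w - z"] by linarith
      qed
      have "\<rho> / 2 * (norm (w - z))\<^sup>2 = (\<rho> * norm (w - z)) * (norm (w - z) / 2)"
        by (simp add: power2_eq_square)
      also have "\<dots> \<le> \<epsilon> * (norm (w - z) / 2)"
        using \<open>\<rho> * norm (w - z) \<le> \<epsilon>\<close> by (rule mult_right_mono) simp
      finally have "\<rho> / 2 * (norm (w - z))\<^sup>2 \<le> \<epsilon> / 2 * norm (w - z)"
        by simp
      moreover have "f z + v \<bullet> (w - z) - \<epsilon> / 2 * norm (w - z) \<le> f w"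
        using fr w by simp
      ultimately show "h w \<le> h z + (\<rho> *\<^sub>R z - v) \<bullet> (w - z) + \<epsilon> * norm (w - z)"
        using h_diff[of w] by linarith
    qed
  qed
  thus ?thesis using h_diff[of y] by linarith
qed

lemma upper_C2_limiting_subdiff_le:
  fixes f :: "'a::real_inner \<Rightarrow> real"
  assumes cvx: "convex_on B (\<lambda>y. \<rho> / 2 * (norm y)\<^sup>2 - f y)" and B: "open B" and \<rho>: "0 \<le> \<rho>"
    and z: "z \<in> B" and y: "y \<in> B" and v: "v \<in> limiting_subdiff f z"
  shows "f y \<le> f z + v \<bullet> (y - z) + \<rho> / 2 * (norm (y - z))\<^sup>2"
proof -
  obtain zs vs where zs: "zs \<longlonglongrightarrow> z" and fz: "(\<lambda>k. f (zs k)) \<longlonglongrightarrow> f z"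
    and vs: "\<And>k. vs k \<in> frechet_subdiff f (zs k)" and vv: "vs \<longlonglongrightarrow> v"
    using v unfolding limiting_subdiff_def by blast
  have "eventually (\<lambda>k. zs k \<in> B) sequentially"
    using zs B z by (simp add: tendsto_def)
  hence "eventually (\<lambda>k. f y \<le> f (zs k) + vs k \<bullet> (y - zs k) + \<rho> / 2 * (norm (y - zs k))\<^sup>2) sequentially"
    by eventually_elim (rule upper_C2_frechet_subdiff_le[OF cvx B \<rho> _ y vs])
  moreover have "(\<lambda>k. f (zs k) + vs k \<bullet> (y - zs k) + \<rho> / 2 * (norm (y - zs k))\<^sup>2)
      \<longlonglongrightarrow> f z + v \<bullet> (y - z) + \<rho> / 2 * (norm (y - z))\<^sup>2"
    by (intro tendsto_intros fz vv zs)
  ultimately show ?thesis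
    by (intro tendsto_lowerbound) auto
qed

lemma frechet_subdiff_norm_le_lipschitz:
  fixes f :: "'a::real_inner \<Rightarrow> real"
  assumes lip: "lipschitz_on K U f" and U: "open U" and z: "z \<in> U" and v: "v \<in> frechet_subdiff f z"
  shows "norm v \<le> K"
proof (cases "v = 0")
  case True
  then show ?thesis using lip by (simp add: lipschitz_on_def)
next
  case False
  have "norm v \<le> K + e" if e: "e > 0" for e
  proof -
    obtain \<delta> where \<delta>: "\<delta> > 0"
      and fr: "\<And>w. norm (w - z) < \<delta> \<Longrightarrow> f z + v \<bullet> (w - z) - e * norm (w - z) \<le> f w"
      using v e unfolding frechet_subdiff_def by blast
    obtain \<delta>' where \<delta>': "\<delta>' > 0" "ball z \<delta>' \<subseteq> U"
      using U z openE by blast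
    define t where "t = min \<delta> \<delta>' / 2"
    have t: "t > 0" "t < \<delta>" "t < \<delta>'" using \<delta> \<delta>' by (auto simp: t_def)
    define w where "w = z + (t / norm v) *\<^sub>R v"
    have wz: "norm (w - z) = t" using t False by (simp add: w_def)
    have wU: "w \<in> U" using wz t \<delta>' by (auto simp: dist_norm norm_minus_commute)
    have "v \<bullet> (w - z) = t * norm v"
      using False by (simp add: w_def dot_square_norm power2_eq_square)
    hence "f z + t * norm v - e * t \<le> f w" using fr[of w] wz t by simp
    moreover have "f w - f z \<le> K * t"
      using lipschitz_onD[OF lip wU z] wz by (simp add: dist_norm dist_real_def)
    ultimately have "t * norm v \<le> t * (K + e)" by (simp add: algebra_simps)
    thus ?thesis using t by simp
  qed
  thus ?thesis by (rule field_le_epsilon)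
qed

lemma limiting_subdiff_norm_le_lipschitz:
  fixes f :: "'a::real_inner \<Rightarrow> real"
  assumes lip: "lipschitz_on K U f" and U: "open U" and z: "z \<in> U" and v: "v \<in> limiting_subdiff f z"
  shows "norm v \<le> K"
proof -
  obtain zs vs where zs: "zs \<longlonglongrightarrow> z" and vs: "\<And>k. vs k \<in> frechet_subdiff f (zs k)" and vv: "vs \<longlonglongrightarrow> v"
    using v unfolding limiting_subdiff_def by blast
  have "eventually (\<lambda>k. zs k \<in> U) sequentially"
    using zs U z by (simp add: tendsto_def)
  hence "eventually (\<lambda>k. norm (vs k) \<le> K) sequentially"
    by eventually_elim (rule frechet_subdiff_norm_le_lipschitz[OF lip U _ vs])
  thus ?thesis by (intro tendsto_upperbound[OF tendsto_norm[OF vv]]) auto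
qed

lemma convex_frechet_subdiff_le:
  fixes \<phi> :: "'a::real_inner \<Rightarrow> real"
  assumes cvx: "convex_on UNIV \<phi>" and v: "v \<in> frechet_subdiff \<phi> z"
  shows "\<phi> z + v \<bullet> (y - z) \<le> \<phi> y"
proof -
  define d where "d = y - z"
  have "\<phi> z + v \<bullet> d \<le> \<phi> y + e" if e: "e > 0" for e
  proof (cases "d = 0")
    case True
    then show ?thesis using e by (simp add: d_def)
  next
    case False
    define \<epsilon> where "\<epsilon> = e / norm d"
    have \<epsilon>: "\<epsilon> > 0" using e False by (simp add: \<epsilon>_def)
    obtain \<delta> where \<delta>: "\<delta> > 0"
      and fr: "\<And>w. norm (w - z) < \<delta> \<Longrightarrow> \<phi> z + v \<bullet> (w - z) - \<epsilon> * norm (w - z) \<le> \<phi> w"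
      using v \<epsilon> unfolding frechet_subdiff_def by blast
    obtain t where t: "0 < t" "t \<le> 1" "t * norm d < \<delta>"
      using small_step_exists[OF norm_ge_zero \<delta>] by blast
    define w where "w = (1 - t) *\<^sub>R z + t *\<^sub>R y"
    have wz: "w - z = t *\<^sub>R d"
      by (simp add: w_def d_def algebra_simps)
    have "\<phi> w \<le> (1 - t) * \<phi> z + t * \<phi> y"
      using convex_onD[OF cvx, of t z y] t by (simp add: w_def)
    moreover have "\<phi> z + t * (v \<bullet> d) - \<epsilon> * (t * norm d) \<le> \<phi> w"
      using fr[of w] t wz by simp
    ultimately have "t * (\<phi> z + v \<bullet> d) \<le> t * (\<phi> y + \<epsilon> * norm d)"
      by (simp add: algebra_simps)
    hence "\<phi> z + v \<bullet> d \<le> \<phi> y + \<epsilon> * norm d" using t by simp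
    thus ?thesis using False by (simp add: \<epsilon>_def)
  qed
  thus ?thesis unfolding d_def by (rule field_le_epsilon)
qed

lemma limiting_subdiff_convex_iff:
  fixes \<phi> :: "'a::real_inner \<Rightarrow> real"
  assumes cvx: "convex_on UNIV \<phi>"
  shows "v \<in> limiting_subdiff \<phi> z \<longleftrightarrow> (\<forall>y. \<phi> z + v \<bullet> (y - z) \<le> \<phi> y)"
proof
  assume "v \<in> limiting_subdiff \<phi> z"
  then obtain zs vs where zs: "zs \<longlonglongrightarrow> z" and fz: "(\<lambda>k. \<phi> (zs k)) \<longlonglongrightarrow> \<phi> z"
    and vs: "\<And>k. vs k \<in> frechet_subdiff \<phi> (zs k)" and vv: "vs \<longlonglongrightarrow> v"
    unfolding limiting_subdiff_def by blast
  show "\<forall>y. \<phi> z + v \<bullet> (y - z) \<le> \<phi> y"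
  proof
    fix y
    have "(\<lambda>k. \<phi> (zs k) + vs k \<bullet> (y - zs k)) \<longlonglongrightarrow> \<phi> z + v \<bullet> (y - z)"
      by (intro tendsto_intros fz vv zs)
    thus "\<phi> z + v \<bullet> (y - z) \<le> \<phi> y"
      by (rule tendsto_upperbound) (simp_all add: convex_frechet_subdiff_le[OF cvx vs])
  qed
next
  assume sub: "\<forall>y. \<phi> z + v \<bullet> (y - z) \<le> \<phi> y"
  have "v \<in> frechet_subdiff \<phi> z"
    unfolding frechet_subdiff_def
  proof (intro CollectI allI impI exI[of _ 1] conjI)
    fix \<epsilon> :: real and w assume "\<epsilon> > 0"
    hence "0 \<le> \<epsilon> * norm (w - z)" by simp
    thus "\<phi> z + v \<bullet> (w - z) - \<epsilon> * norm (w - z) \<le> \<phi> w"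
      using sub[rule_format, of w] by linarith
  qed simp
  thus "v \<in> limiting_subdiff \<phi> z"
    unfolding limiting_subdiff_def by (intro CollectI exI[of _ "\<lambda>_. z"] exI[of _ "\<lambda>_. v"]) auto
qed

lemma LIMSEQ_close_to:
  fixes a b :: "nat \<Rightarrow> 'a::real_normed_vector"
  assumes close: "\<And>k. norm (a k - b k) < inverse (real (Suc k))" and b: "b \<longlonglongrightarrow> l"
  shows "a \<longlonglongrightarrow> l"
proof -
  have "(\<lambda>k. a k - b k) \<longlonglongrightarrow> 0"
    using close by (intro Lim_null_comparison[OF always_eventually LIMSEQ_inverse_real_of_nat])
      (auto intro: less_imp_le)
  from tendsto_add[OF this b] show ?thesis by simp
qed

lemma limiting_subdiff_closed:
  fixes f :: "'a::real_inner \<Rightarrow> real"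
  assumes zs: "zs \<longlonglongrightarrow> z" and fz: "(\<lambda>k. f (zs k)) \<longlonglongrightarrow> f z"
    and vs: "\<And>k. vs k \<in> limiting_subdiff f (zs k)" and vv: "vs \<longlonglongrightarrow> v"
  shows "v \<in> limiting_subdiff f z"
proof -
  define r where "r k = inverse (real (Suc k))" for k
  have "\<forall>k. \<exists>p w. norm (p - zs k) < r k \<and> norm (f p - f (zs k)) < r k
           \<and> w \<in> frechet_subdiff f p \<and> norm (w - vs k) < r k"
  proof
    fix k
    obtain ps ws where ps: "ps \<longlonglongrightarrow> zs k" and fp: "(\<lambda>j. f (ps j)) \<longlonglongrightarrow> f (zs k)"
      and ws: "\<And>j. ws j \<in> frechet_subdiff f (ps j)" and wv: "ws \<longlonglongrightarrow> vs k"
      using vs[of k] unfolding limiting_subdiff_def by blast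
    have "r k > 0" by (simp add: r_def)
    from tendstoD[OF ps this] tendstoD[OF fp this] tendstoD[OF wv this]
    have "eventually (\<lambda>j. dist (ps j) (zs k) < r k \<and> dist (f (ps j)) (f (zs k)) < r k
        \<and> dist (ws j) (vs k) < r k) sequentially"
      by eventually_elim blast
    then obtain j where "dist (ps j) (zs k) < r k \<and> dist (f (ps j)) (f (zs k)) < r k
        \<and> dist (ws j) (vs k) < r k"
      using eventually_sequentially by auto
    thus "\<exists>p w. norm (p - zs k) < r k \<and> norm (f p - f (zs k)) < r k
           \<and> w \<in> frechet_subdiff f p \<and> norm (w - vs k) < r k"
      using ws[of j] by (auto simp: dist_norm)
  qed
  then obtain p where "\<forall>k. \<exists>w. norm (p k - zs k) < r k \<and> norm (f (p k) - f (zs k)) < r k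
           \<and> w \<in> frechet_subdiff f (p k) \<and> norm (w - vs k) < r k"
    by (rule choice[THEN exE])
  then obtain w where pw: "\<forall>k. norm (p k - zs k) < r k \<and> norm (f (p k) - f (zs k)) < r k
           \<and> w k \<in> frechet_subdiff f (p k) \<and> norm (w k - vs k) < r k"
    by (rule choice[THEN exE])
  have "p \<longlonglongrightarrow> z" "(\<lambda>k. f (p k)) \<longlonglongrightarrow> f z" "w \<longlonglongrightarrow> v"
    by (rule LIMSEQ_close_to[OF _ zs] LIMSEQ_close_to[OF _ fz] LIMSEQ_close_to[OF _ vv],
        use pw in \<open>simp add: r_def\<close>)+
  thus ?thesis
    unfolding limiting_subdiff_def using pw by blast
qed

text \<open>Compare \<open>x\<close> with the point of the unit sphere around \<open>x\<close> opposite to \<open>z\<close>.\<close>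

lemma convex_on_lower_linear_bound:
  fixes \<phi> :: "'a::real_normed_vector \<Rightarrow> real"
  assumes cvx: "convex_on UNIV \<phi>" and B: "\<And>w. w \<in> cball x 1 \<Longrightarrow> \<bar>\<phi> w\<bar> \<le> B"
  shows "\<phi> x - 2 * B * norm (z - x) \<le> \<phi> z"
proof (cases "z = x")
  case True
  then show ?thesis by simp
next
  case False
  define n where "n = norm (z - x)"
  have n: "n > 0" using False by (simp add: n_def)
  define u where "u = x - (1 / n) *\<^sub>R (z - x)"
  have u: "u \<in> cball x 1" using n by (simp add: u_def n_def dist_norm)
  have "(1 + 1 / n) * \<phi> x \<le> \<phi> u + 1 / n * \<phi> z"
    using convex_on_extrapolate[OF cvx _ _, of x "1 / n" z] n by (simp add: u_def)
  hence "n * ((1 + 1 / n) * \<phi> x) \<le> n * (\<phi> u + 1 / n * \<phi> z)"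
    using n by (intro mult_left_mono) auto
  moreover have "n * ((1 + 1 / n) * \<phi> x) = n * \<phi> x + \<phi> x" "n * (\<phi> u + 1 / n * \<phi> z) = n * \<phi> u + \<phi> z"
    using n by (simp_all add: algebra_simps)
  ultimately have "n * (\<phi> x - \<phi> u) \<le> \<phi> z - \<phi> x"
    by (simp add: algebra_simps)
  moreover have "n * (- 2 * B) \<le> n * (\<phi> x - \<phi> u)"
    using B[OF u] B[of x] n by (intro mult_left_mono) (auto simp: abs_le_iff)
  ultimately show ?thesis by (simp add: n_def algebra_simps)
qed

lemma subgradient_norm_le:
  fixes \<phi> :: "'a::real_inner \<Rightarrow> real"
  assumes sub: "\<And>y. \<phi> x + a \<bullet> (y - x) \<le> \<phi> y" and B: "\<And>w. w \<in> cball x 1 \<Longrightarrow> \<bar>\<phi> w\<bar> \<le> B"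
  shows "norm a \<le> 2 * B"
proof (cases "a = 0")
  case True
  then show ?thesis using B[of x] by simp
next
  case False
  define u where "u = (1 / norm a) *\<^sub>R a"
  have "a \<bullet> u = norm a"
    using False by (simp add: u_def dot_square_norm power2_eq_square)
  hence "\<phi> x + norm a \<le> \<phi> (x + u)" using sub[of "x + u"] by simp
  moreover have "x + u \<in> cball x 1" using False by (simp add: u_def dist_norm)
  ultimately show ?thesis using B[of "x + u"] B[of x] by (simp add: abs_le_iff)
qed

definition uniform_upper_C2_on :: "'a::real_inner set \<Rightarrow> ('a \<Rightarrow> real) \<Rightarrow> real \<Rightarrow> real \<Rightarrow> bool" where
  "uniform_upper_C2_on S f \<rho> K \<longleftrightarrow>
     (\<forall>z\<in>S. \<forall>v\<in>limiting_subdiff f z. norm v \<le> K \<and>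
        (\<forall>y\<in>S. f y \<le> f z + v \<bullet> (y - z) + \<rho> / 2 * (norm (y - z))\<^sup>2))"

lemma uniform_upper_C2_onD:
  assumes "uniform_upper_C2_on S f \<rho> K" "z \<in> S" "v \<in> limiting_subdiff f z"
  shows "norm v \<le> K" and "y \<in> S \<Longrightarrow> f y \<le> f z + v \<bullet> (y - z) + \<rho> / 2 * (norm (y - z))\<^sup>2"
  using assms unfolding uniform_upper_C2_on_def by blast+

lemma uniform_upper_C2_on_mono:
  assumes f: "uniform_upper_C2_on S f \<rho> K" and "T \<subseteq> S" "\<rho> \<le> \<rho>'" "K \<le> K'"
  shows "uniform_upper_C2_on T f \<rho>' K'"
  unfolding uniform_upper_C2_on_def
proof (intro ballI conjI)
  fix z v y assume z: "z \<in> T" and v: "v \<in> limiting_subdiff f z"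
  show "norm v \<le> K'" using uniform_upper_C2_onD(1)[OF f _ v] z assms by force
  assume y: "y \<in> T"
  have "f y \<le> f z + v \<bullet> (y - z) + \<rho> / 2 * (norm (y - z))\<^sup>2"
    using uniform_upper_C2_onD(2)[OF f _ v] y z assms by blast
  also have "\<rho> / 2 * (norm (y - z))\<^sup>2 \<le> \<rho>' / 2 * (norm (y - z))\<^sup>2"
    using assms by (intro mult_right_mono) auto
  finally show "f y \<le> f z + v \<bullet> (y - z) + \<rho>' / 2 * (norm (y - z))\<^sup>2" by simp
qed

lemma loc_lipschitz_at_imp_isCont:
  assumes "loc_lipschitz_at f q"
  shows "isCont f q"
proof -
  obtain \<delta> K where "\<delta> > 0" and lip: "lipschitz_on K (ball q \<delta>) f"
    using assms unfolding loc_lipschitz_at_def by blast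
  from lip have "continuous_on (ball q \<delta>) f" by (rule lipschitz_on_continuous_on)
  thus ?thesis using \<open>\<delta> > 0\<close> by (metis centre_in_ball continuous_on_eq_continuous_at open_ball)
qed

lemma uniform_upper_C2_on_ball:
  fixes f :: "'a::real_inner \<Rightarrow> real"
  assumes "loc_lipschitz_at f q" and "upper_C2_at f q"
  obtains \<delta> \<rho> K where "\<delta> > 0" "\<rho> \<ge> 0" "K \<ge> 0" "uniform_upper_C2_on (ball q \<delta>) f \<rho> K"
proof -
  obtain \<delta>1 K where \<delta>1: "\<delta>1 > 0" and lip: "lipschitz_on K (ball q \<delta>1) f"
    using assms(1) unfolding loc_lipschitz_at_def by blast
  obtain \<delta>2 \<rho> where \<delta>2: "\<delta>2 > 0" and \<rho>: "\<rho> \<ge> 0"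
    and cvx: "convex_on (ball q \<delta>2) (\<lambda>y. \<rho> / 2 * (norm y)\<^sup>2 - f y)"
    using assms(2) unfolding upper_C2_at_def by blast
  define \<delta> where "\<delta> = min \<delta>1 \<delta>2"
  have lip': "lipschitz_on K (ball q \<delta>) f"
    by (rule lipschitz_on_subset[OF lip]) (auto simp: \<delta>_def)
  have cvx': "convex_on (ball q \<delta>) (\<lambda>y. \<rho> / 2 * (norm y)\<^sup>2 - f y)"
    by (rule convex_on_subset[OF cvx]) (auto simp: \<delta>_def)
  have "uniform_upper_C2_on (ball q \<delta>) f \<rho> K"
    unfolding uniform_upper_C2_on_def
    using limiting_subdiff_norm_le_lipschitz[OF lip' open_ball]
      upper_C2_limiting_subdiff_le[OF cvx' open_ball \<rho>] by blast
  moreover have "K \<ge> 0" using lip by (rule lipschitz_on_nonneg)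
  ultimately show ?thesis
    using that[of \<delta> \<rho> K] \<delta>1 \<delta>2 \<rho> by (simp add: \<delta>_def)
qed

lemma quadratic_bound_far:
  fixes f :: "'a::real_inner \<Rightarrow> real"
  assumes "\<bar>f y\<bar> \<le> M" "\<bar>f z\<bar> \<le> M" "norm v \<le> K" "0 < \<delta>" "\<delta> \<le> norm (y - z)"
  shows "f y \<le> f z + v \<bullet> (y - z) + (4 * M / \<delta>\<^sup>2 + 2 * K / \<delta>) / 2 * (norm (y - z))\<^sup>2"
proof -
  define n where "n = norm (y - z)"
  have n: "\<delta> \<le> n" "0 < n" using assms by (auto simp: n_def)
  have M: "0 \<le> M" "0 \<le> K" using assms(1,3) norm_ge_zero[of v] by linarith+
  have "f y - f z \<le> 2 * M / \<delta>\<^sup>2 * \<delta>\<^sup>2"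
    using assms(1,2) \<open>0 < \<delta>\<close> by (simp add: abs_le_iff)
  also have "\<dots> \<le> 2 * M / \<delta>\<^sup>2 * n\<^sup>2"
    using n M \<open>0 < \<delta>\<close> by (intro mult_left_mono power_mono) auto
  finally have fyz: "f y - f z \<le> 2 * M / \<delta>\<^sup>2 * n\<^sup>2" .
  have "- (v \<bullet> (y - z)) \<le> K * n"
    using Cauchy_Schwarz_ineq2[of v "y - z"] mult_right_mono[OF assms(3), of n]
    by (simp add: n_def)
  also have "\<dots> = K / \<delta> * (\<delta> * n)" using \<open>0 < \<delta>\<close> by simp
  also have "\<dots> \<le> K / \<delta> * (n * n)"
    using n M \<open>0 < \<delta>\<close> by (intro mult_left_mono mult_right_mono) auto
  finally have "- (v \<bullet> (y - z)) \<le> K / \<delta> * n\<^sup>2" by (simp add: power2_eq_square)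
  with fyz show ?thesis
    by (simp add: n_def[symmetric] add_divide_distrib distrib_right)
qed

lemma uniform_upper_C2_on_Lebesgue_cover:
  fixes f :: "'a::real_inner \<Rightarrow> real"
  assumes e: "0 < e" and cover: "\<And>z. z \<in> S \<Longrightarrow> \<exists>U\<in>\<U>. z \<in> U \<and> ball z e \<subseteq> U"
    and local: "\<And>U. U \<in> \<U> \<Longrightarrow> uniform_upper_C2_on U f \<rho> K"
    and M: "\<And>y. y \<in> S \<Longrightarrow> \<bar>f y\<bar> \<le> M" and \<rho>: "0 \<le> \<rho>" and K: "0 \<le> K"
  shows "uniform_upper_C2_on S f (\<rho> + (4 * M / e\<^sup>2 + 2 * K / e)) K"
  unfolding uniform_upper_C2_on_def
proof (intro ballI conjI)
  fix z v assume z: "z \<in> S" and v: "v \<in> limiting_subdiff f z"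
  obtain U where U: "U \<in> \<U>" "z \<in> U" "ball z e \<subseteq> U" using cover[OF z] by blast
  show nv: "norm v \<le> K" using uniform_upper_C2_onD(1)[OF local[OF U(1)] U(2) v] .
  fix y assume y: "y \<in> S"
  show "f y \<le> f z + v \<bullet> (y - z) + (\<rho> + (4 * M / e\<^sup>2 + 2 * K / e)) / 2 * (norm (y - z))\<^sup>2"
  proof (cases "norm (y - z) < e")
    case True
    hence "y \<in> U" using U(3) by (auto simp: dist_norm norm_minus_commute)
    hence "f y \<le> f z + v \<bullet> (y - z) + \<rho> / 2 * (norm (y - z))\<^sup>2"
      using uniform_upper_C2_onD(2)[OF local[OF U(1)] U(2) v] by blast
    also have "\<dots> \<le> f z + v \<bullet> (y - z) + (\<rho> + (4 * M / e\<^sup>2 + 2 * K / e)) / 2 * (norm (y - z))\<^sup>2"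
      using e K M[OF y] by (intro add_left_mono mult_right_mono divide_right_mono) auto
    finally show ?thesis .
  next
    case False
    have "f y \<le> f z + v \<bullet> (y - z) + (4 * M / e\<^sup>2 + 2 * K / e) / 2 * (norm (y - z))\<^sup>2"
      using M[OF y] M[OF z] nv e False by (intro quadratic_bound_far) auto
    also have "\<dots> \<le> f z + v \<bullet> (y - z) + (\<rho> + (4 * M / e\<^sup>2 + 2 * K / e)) / 2 * (norm (y - z))\<^sup>2"
      using \<rho> by (intro add_left_mono mult_right_mono divide_right_mono) auto
    finally show ?thesis .
  qed
qed

lemma uniform_upper_C2_on_compact:
  fixes f :: "'a::euclidean_space \<Rightarrow> real"
  assumes S: "compact S" and reg: "\<forall>q\<in>S. loc_lipschitz_at f q \<and> upper_C2_at f q"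
  obtains \<rho> K where "\<rho> \<ge> 0" "K \<ge> 0" "uniform_upper_C2_on S f \<rho> K"
proof -
  have "\<forall>q\<in>S. \<exists>\<delta> \<rho> K. \<delta> > 0 \<and> \<rho> \<ge> 0 \<and> K \<ge> 0 \<and> uniform_upper_C2_on (ball q \<delta>) f \<rho> K"
  proof
    fix q assume "q \<in> S"
    then obtain \<delta> \<rho> K where "\<delta> > 0" "\<rho> \<ge> 0" "K \<ge> 0" "uniform_upper_C2_on (ball q \<delta>) f \<rho> K"
      using reg uniform_upper_C2_on_ball[of f q] by blast
    thus "\<exists>\<delta> \<rho> K. \<delta> > 0 \<and> \<rho> \<ge> 0 \<and> K \<ge> 0 \<and> uniform_upper_C2_on (ball q \<delta>) f \<rho> K"
      by blast
  qed
  then obtain D where "\<forall>q\<in>S. \<exists>\<rho> K. D q > 0 \<and> \<rho> \<ge> 0 \<and> K \<ge> 0 \<and>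
      uniform_upper_C2_on (ball q (D q)) f \<rho> K"
    by (rule bchoice[THEN exE])
  then obtain R where "\<forall>q\<in>S. \<exists>K. D q > 0 \<and> R q \<ge> 0 \<and> K \<ge> 0 \<and>
      uniform_upper_C2_on (ball q (D q)) f (R q) K"
    by (rule bchoice[THEN exE])
  then obtain Kf where "\<forall>q\<in>S. D q > 0 \<and> R q \<ge> 0 \<and> Kf q \<ge> 0 \<and>
      uniform_upper_C2_on (ball q (D q)) f (R q) (Kf q)"
    by (rule bchoice[THEN exE])
  hence DRK: "\<And>q. q \<in> S \<Longrightarrow>
      D q > 0 \<and> R q \<ge> 0 \<and> Kf q \<ge> 0 \<and> uniform_upper_C2_on (ball q (D q)) f (R q) (Kf q)"
    by blast
  have "S \<subseteq> (\<Union>q\<in>S. ball q (D q))" using DRK by force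
  then obtain T where T: "T \<subseteq> S" "finite T" "S \<subseteq> (\<Union>q\<in>T. ball q (D q))"
    by (rule compactE_image[OF S open_ball])
  obtain e where e: "e > 0" and leb: "\<And>z. z \<in> S \<Longrightarrow> \<exists>G\<in>(\<lambda>q. ball q (D q)) ` T. ball z e \<subseteq> G"
    using Heine_Borel_lemma[OF S T(3)] by auto
  have cover: "\<exists>U\<in>(\<lambda>q. ball q (D q)) ` T. z \<in> U \<and> ball z e \<subseteq> U" if z: "z \<in> S" for z
  proof -
    obtain G where "G \<in> (\<lambda>q. ball q (D q)) ` T" "ball z e \<subseteq> G" using leb[OF z] by blast
    moreover have "z \<in> ball z e" using e by simp
    ultimately show ?thesis by blast
  qed
  have "continuous_on S f"
    using reg loc_lipschitz_at_imp_isCont continuous_at_imp_continuous_on by blast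
  hence "bounded (f ` S)"
    by (intro compact_imp_bounded compact_continuous_image S)
  then obtain M where M0: "\<forall>t\<in>f ` S. norm t \<le> M"
    unfolding bounded_iff by blast
  have M: "\<bar>f y\<bar> \<le> max M 0" if "y \<in> S" for y
    using M0 that by fastforce
  define K where "K = Max (insert 0 (Kf ` T))"
  define \<rho> where "\<rho> = Max (insert 0 (R ` T))"
  have K: "K \<ge> 0" and \<rho>: "\<rho> \<ge> 0" using T(2) by (auto simp: K_def \<rho>_def)
  have local: "uniform_upper_C2_on U f \<rho> K" if U: "U \<in> (\<lambda>q. ball q (D q)) ` T" for U
  proof -
    obtain q where q: "q \<in> T" "U = ball q (D q)" using U by blast
    have le: "R q \<le> \<rho>" "Kf q \<le> K" using q T(2) by (auto simp: K_def \<rho>_def)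
    have "uniform_upper_C2_on (ball q (D q)) f (R q) (Kf q)" using DRK[of q] q T(1) by blast
    thus ?thesis
      unfolding q(2) by (rule uniform_upper_C2_on_mono) (use le in auto)
  qed
  have "uniform_upper_C2_on S f (\<rho> + (4 * max M 0 / e\<^sup>2 + 2 * K / e)) K"
    using uniform_upper_C2_on_Lebesgue_cover[OF e cover local M \<rho> K] .
  moreover have "0 \<le> \<rho> + (4 * max M 0 / e\<^sup>2 + 2 * K / e)"
    using \<rho> K e by (intro add_nonneg_nonneg divide_nonneg_pos) auto
  ultimately show ?thesis using that K by blast
qed

lemma uniform_upper_C2_on_compact_components:
  fixes g :: "'a::euclidean_space \<Rightarrow> real^'m::finite"
  assumes S: "compact S"
    and reg: "\<forall>i. \<forall>q\<in>S. loc_lipschitz_at (\<lambda>w. g w $ i) q \<and> upper_C2_at (\<lambda>w. g w $ i) q"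
  obtains \<rho> K where "\<rho> \<ge> 0" "K \<ge> 0" "\<forall>i. uniform_upper_C2_on S (\<lambda>w. g w $ i) \<rho> K"
proof -
  have "\<forall>i. \<exists>\<rho> K. \<rho> \<ge> 0 \<and> K \<ge> 0 \<and> uniform_upper_C2_on S (\<lambda>w. g w $ i) \<rho> K"
  proof
    fix i
    obtain \<rho> K where "\<rho> \<ge> 0" "K \<ge> 0" "uniform_upper_C2_on S (\<lambda>w. g w $ i) \<rho> K"
      using uniform_upper_C2_on_compact[OF S, of "\<lambda>w. g w $ i"] reg by blast
    thus "\<exists>\<rho> K. \<rho> \<ge> 0 \<and> K \<ge> 0 \<and> uniform_upper_C2_on S (\<lambda>w. g w $ i) \<rho> K" by blast
  qed
  then obtain \<rho>i where "\<forall>i. \<exists>K. \<rho>i i \<ge> 0 \<and> K \<ge> 0 \<and> uniform_upper_C2_on S (\<lambda>w. g w $ i) (\<rho>i i) K"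
    by (rule choice[THEN exE])
  then obtain Ki where c: "\<And>i. \<rho>i i \<ge> 0 \<and> Ki i \<ge> 0 \<and> uniform_upper_C2_on S (\<lambda>w. g w $ i) (\<rho>i i) (Ki i)"
    by (rule choice[THEN exE]) blast
  define \<rho> where "\<rho> = Max (range \<rho>i)"
  define K where "K = Max (range Ki)"
  have le: "\<rho>i i \<le> \<rho>" "Ki i \<le> K" for i
    by (auto simp: \<rho>_def K_def)
  show ?thesis
  proof (rule that)
    show "\<rho> \<ge> 0" "K \<ge> 0" using c le by (meson order_trans)+
    show "\<forall>i. uniform_upper_C2_on S (\<lambda>w. g w $ i) \<rho> K"
      using c le by (blast intro: uniform_upper_C2_on_mono)
  qed
qed

section \<open>Normal cones\<close>

lemma regular_normal_cone_convex_le: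
  assumes C: "convex C" and x: "x \<in> C" and v: "v \<in> regular_normal_cone C x" and y: "y \<in> C"
  shows "v \<bullet> (y - x) \<le> 0"
proof -
  have le: "v \<bullet> (y - x) \<le> \<epsilon> * norm (y - x)" if \<epsilon>: "\<epsilon> > 0" for \<epsilon>
  proof -
    obtain \<delta> where \<delta>: "\<delta> > 0"
      and reg: "\<And>w. w \<in> C \<Longrightarrow> norm (w - x) < \<delta> \<Longrightarrow> v \<bullet> (w - x) \<le> \<epsilon> * norm (w - x)"
      using v x \<epsilon> unfolding regular_normal_cone_def by auto
    obtain t where t: "0 < t" "t \<le> 1" "t * norm (y - x) < \<delta>"
      using small_step_exists[OF norm_ge_zero \<delta>] by blast
    have "x + t *\<^sub>R (y - x) \<in> C"
      using convexD_alt[OF C x y, of t] t by (simp add: algebra_simps)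
    hence "t * (v \<bullet> (y - x)) \<le> t * (\<epsilon> * norm (y - x))"
      using reg[of "x + t *\<^sub>R (y - x)"] t by simp
    thus ?thesis using t by simp
  qed
  show ?thesis
  proof (cases "y = x")
    case False
    have "v \<bullet> (y - x) \<le> 0 + e" if "e > 0" for e
      using le[of "e / norm (y - x)"] that False by simp
    thus ?thesis by (rule field_le_epsilon)
  qed simp
qed

lemma normal_cone_convex:
  assumes C: "convex C" and x: "x \<in> C"
  shows "normal_cone C x = {v. \<forall>y\<in>C. v \<bullet> (y - x) \<le> 0}"
proof (intro set_eqI iffI)
  fix v assume "v \<in> normal_cone C x"
  then obtain xs vs where xs: "\<And>k. xs k \<in> C" "xs \<longlonglongrightarrow> x"
    and vs: "\<And>k. vs k \<in> regular_normal_cone C (xs k)" "vs \<longlonglongrightarrow> v"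
    using x unfolding normal_cone_def by auto
  show "v \<in> {v. \<forall>y\<in>C. v \<bullet> (y - x) \<le> 0}"
  proof (intro CollectI ballI)
    fix y assume y: "y \<in> C"
    have "(\<lambda>k. vs k \<bullet> (y - xs k)) \<longlonglongrightarrow> v \<bullet> (y - x)"
      by (intro tendsto_intros xs vs)
    thus "v \<bullet> (y - x) \<le> 0"
      by (rule tendsto_upperbound) (simp_all add: regular_normal_cone_convex_le[OF C xs(1) vs(1) y])
  qed
next
  fix v assume "v \<in> {v. \<forall>y\<in>C. v \<bullet> (y - x) \<le> 0}"
  hence polar: "\<And>y. y \<in> C \<Longrightarrow> v \<bullet> (y - x) \<le> 0" by blast
  have "\<forall>\<epsilon>>0. \<exists>\<delta>>0. \<forall>y\<in>C. norm (y - x) < \<delta> \<longrightarrow> v \<bullet> (y - x) \<le> \<epsilon> * norm (y - x)"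
  proof (intro allI impI exI[of _ 1] conjI ballI)
    fix \<epsilon> :: real and y assume "\<epsilon> > 0" "y \<in> C"
    moreover have "0 \<le> \<epsilon> * norm (y - x)" using \<open>\<epsilon> > 0\<close> by simp
    ultimately show "v \<bullet> (y - x) \<le> \<epsilon> * norm (y - x)"
      using polar[of y] by linarith
  qed simp
  hence "v \<in> regular_normal_cone C x"
    using x unfolding regular_normal_cone_def by simp
  hence "\<exists>xs vs. (\<forall>k. xs k \<in> C \<and> vs k \<in> regular_normal_cone C (xs k)) \<and> xs \<longlonglongrightarrow> x \<and> vs \<longlonglongrightarrow> v"
    using x by (intro exI[of _ "\<lambda>_. x"] exI[of _ "\<lambda>_. v"]) auto
  thus "v \<in> normal_cone C x"
    using x by (simp add: normal_cone_def)
qed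

lemma convex_nonpos_orthant: "convex (nonpos_orthant :: (real^'m::finite) set)"
  unfolding convex_def nonpos_orthant_def
  by (auto intro!: add_nonpos_nonpos mult_nonneg_nonpos)

lemma closed_nonpos_orthant: "closed (nonpos_orthant :: (real^'m::finite) set)"
  unfolding nonpos_orthant_def by (intro closed_Collect_all closed_Collect_le continuous_intros)

lemma normal_cone_nonpos_orthant_iff:
  fixes z lam :: "real^'m::finite"
  shows "lam \<in> normal_cone nonpos_orthant z \<longleftrightarrow>
           z \<in> nonpos_orthant \<and> (\<forall>i. 0 \<le> lam $ i \<and> lam $ i * z $ i = 0)"
proof (cases "z \<in> nonpos_orthant")
  case False
  thus ?thesis by (simp add: normal_cone_def)
next
  case z: True
  have z_le: "z $ i \<le> 0" for i using z by (simp add: nonpos_orthant_def)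
  have "(\<forall>y\<in>nonpos_orthant. lam \<bullet> (y - z) \<le> 0) \<longleftrightarrow> (\<forall>i. 0 \<le> lam $ i \<and> lam $ i * z $ i = 0)"
  proof
    assume H: "\<forall>y\<in>nonpos_orthant. lam \<bullet> (y - z) \<le> 0"
    have lam_ge: "0 \<le> lam $ i" for i
    proof -
      have "z - axis i 1 \<in> nonpos_orthant"
        unfolding nonpos_orthant_def
      proof (intro CollectI allI)
        fix j show "(z - axis i 1) $ j \<le> 0" using z_le[of j] z_le[of i] by (simp add: axis_def)
      qed
      thus ?thesis using H by (auto simp: inner_axis)
    qed
    have sum0: "(\<Sum>i\<in>UNIV. - (lam $ i * z $ i)) = 0"
    proof -
      have "0 \<in> nonpos_orthant" by (simp add: nonpos_orthant_def)
      hence "lam \<bullet> (0 - z) \<le> 0" using H by blast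
      hence "0 \<le> (\<Sum>i\<in>UNIV. lam $ i * z $ i)" by (simp add: inner_vec_def sum_negf)
      moreover have "(\<Sum>i\<in>UNIV. lam $ i * z $ i) \<le> 0"
        using lam_ge z_le by (intro sum_nonpos mult_nonneg_nonpos) auto
      ultimately show ?thesis by (simp add: sum_negf)
    qed
    have "\<forall>i\<in>UNIV. 0 \<le> - (lam $ i * z $ i)"
      using lam_ge z_le by (simp add: mult_nonneg_nonpos)
    hence "\<forall>i\<in>UNIV. - (lam $ i * z $ i) = 0"
      using sum0 sum_nonneg_eq_0_iff[of "UNIV :: 'm set" "\<lambda>i. - (lam $ i * z $ i)"] by simp
    thus "\<forall>i. 0 \<le> lam $ i \<and> lam $ i * z $ i = 0" using lam_ge by simp
  next
    assume H: "\<forall>i. 0 \<le> lam $ i \<and> lam $ i * z $ i = 0"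
    show "\<forall>y\<in>nonpos_orthant. lam \<bullet> (y - z) \<le> 0"
    proof
      fix y :: "real^'m" assume y: "y \<in> nonpos_orthant"
      have "lam \<bullet> (y - z) = (\<Sum>i\<in>UNIV. lam $ i * y $ i - lam $ i * z $ i)"
        by (simp add: inner_vec_def right_diff_distrib)
      also have "\<dots> = (\<Sum>i\<in>UNIV. lam $ i * y $ i)"
        using H by (intro sum.cong) auto
      also have "\<dots> \<le> 0"
        using H y by (intro sum_nonpos mult_nonneg_nonpos) (auto simp: nonpos_orthant_def)
      finally show "lam \<bullet> (y - z) \<le> 0" .
    qed
  qed
  thus ?thesis using z by (simp add: normal_cone_convex[OF convex_nonpos_orthant z])
qed

lemma normal_cone_nonpos_orthant_limit:
  fixes zs lams :: "nat \<Rightarrow> real^'m::finite"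
  assumes zs: "zs \<longlonglongrightarrow> z" and lams: "lams \<longlonglongrightarrow> lam"
    and N: "eventually (\<lambda>k. lams k \<in> normal_cone nonpos_orthant (zs k)) sequentially"
  shows "lam \<in> normal_cone nonpos_orthant z"
proof -
  have "z $ i \<le> 0 \<and> 0 \<le> lam $ i \<and> lam $ i * z $ i = 0" for i
  proof -
    have zi: "(\<lambda>k. zs k $ i) \<longlonglongrightarrow> z $ i" and li: "(\<lambda>k. lams k $ i) \<longlonglongrightarrow> lam $ i"
      by (intro tendsto_vec_nth zs lams)+
    have ev: "eventually (\<lambda>k. zs k $ i \<le> 0 \<and> 0 \<le> lams k $ i \<and> lams k $ i * zs k $ i = 0) sequentially"
      using N by eventually_elim (unfold normal_cone_nonpos_orthant_iff, auto simp: nonpos_orthant_def)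
    have "eventually (\<lambda>k. zs k $ i \<le> 0) sequentially"
      using ev by eventually_elim blast
    hence "z $ i \<le> 0"
      by (intro tendsto_upperbound[OF zi]) simp_all
    moreover have "eventually (\<lambda>k. 0 \<le> lams k $ i) sequentially"
      using ev by eventually_elim blast
    hence "0 \<le> lam $ i"
      by (intro tendsto_lowerbound[OF li]) simp_all
    moreover have "(\<lambda>k. lams k $ i * zs k $ i) \<longlonglongrightarrow> lam $ i * z $ i"
      by (intro tendsto_mult li zi)
    moreover have "eventually (\<lambda>k. lams k $ i * zs k $ i = 0) sequentially"
      using ev by eventually_elim blast
    hence "(\<lambda>k. lams k $ i * zs k $ i) \<longlonglongrightarrow> 0"
      by (rule tendsto_eventually)
    ultimately show ?thesis using LIMSEQ_unique by blast
  qed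
  thus ?thesis unfolding normal_cone_nonpos_orthant_iff by (auto simp: nonpos_orthant_def)
qed

section \<open>Quadratic forms\<close>

lemma inner_matrix_symmetric:
  fixes Q :: "real^'n^'n"
  assumes "transpose Q = Q"
  shows "a \<bullet> (Q *v b) = b \<bullet> (Q *v a)"
  by (metis assms dot_lmul_matrix inner_commute vector_transpose_matrix)

lemma quadratic_form_add:
  fixes Q :: "real^'n^'n"
  assumes "transpose Q = Q"
  shows "(w + h) \<bullet> (Q *v (w + h)) = w \<bullet> (Q *v w) + 2 * ((Q *v w) \<bullet> h) + h \<bullet> (Q *v h)"
  using inner_matrix_symmetric[OF assms, of w h]
  by (simp add: matrix_vector_right_distrib inner_add_left inner_add_right inner_commute)

lemma psd_Cauchy_Schwarz:
  fixes Q :: "real^'n^'n"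
  assumes sym: "transpose Q = Q" and psd: "\<forall>d. 0 \<le> d \<bullet> (Q *v d)"
  shows "(a \<bullet> (Q *v b))\<^sup>2 \<le> (a \<bullet> (Q *v a)) * (b \<bullet> (Q *v b))"
proof -
  define A B C where "A = a \<bullet> (Q *v a)" and "B = a \<bullet> (Q *v b)" and "C = b \<bullet> (Q *v b)"
  have quad: "0 \<le> A + 2 * t * B + t\<^sup>2 * C" for t
  proof -
    have "0 \<le> (a + t *\<^sub>R b) \<bullet> (Q *v (a + t *\<^sub>R b))" using psd by blast
    also have "\<dots> = A + 2 * t * B + t\<^sup>2 * C"
      using inner_matrix_symmetric[OF sym, of a b]
      by (simp add: quadratic_form_add[OF sym] matrix_vector_mult_scaleR A_def B_def C_def
          inner_commute power2_eq_square)
    finally show ?thesis .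
  qed
  show ?thesis
  proof (cases "C = 0")
    case True
    have "B = 0"
    proof (rule ccontr)
      assume "B \<noteq> 0"
      hence "A + 2 * (- (\<bar>A\<bar> + 1) / (2 * B)) * B + (- (\<bar>A\<bar> + 1) / (2 * B))\<^sup>2 * C = A - (\<bar>A\<bar> + 1)"
        using True by (simp add: field_simps)
      thus False using quad[of "- (\<bar>A\<bar> + 1) / (2 * B)"] by linarith
    qed
    thus ?thesis using True by (simp add: A_def B_def C_def)
  next
    case False
    moreover have "0 \<le> C" using psd by (simp add: C_def)
    ultimately have C: "C > 0" by linarith
    have "A + 2 * (- B / C) * B + (- B / C)\<^sup>2 * C = A - B\<^sup>2 / C"
      using C by (simp add: field_simps power2_eq_square)
    hence "B\<^sup>2 / C \<le> A" using quad[of "- B / C"] by linarith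
    hence "B\<^sup>2 \<le> A * C" using C by (simp add: field_simps)
    thus ?thesis by (simp add: A_def B_def C_def)
  qed
qed

lemma psd_matrix_vector_norm_le:
  fixes Q :: "real^'n^'n"
  assumes sym: "transpose Q = Q" and psd: "\<forall>d. 0 \<le> d \<bullet> (Q *v d)"
    and up: "\<forall>d. d \<bullet> (Q *v d) \<le> \<Lambda> * (norm d)\<^sup>2" and \<Lambda>: "0 \<le> \<Lambda>"
  shows "norm (Q *v d) \<le> \<Lambda> * norm d"
proof -
  define w where "w = Q *v d"
  have "((norm w)\<^sup>2)\<^sup>2 = (w \<bullet> (Q *v d))\<^sup>2"
    by (simp add: w_def power2_norm_eq_inner)
  also have "\<dots> \<le> (w \<bullet> (Q *v w)) * (d \<bullet> (Q *v d))"
    by (rule psd_Cauchy_Schwarz[OF sym psd])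
  also have "\<dots> \<le> (\<Lambda> * (norm w)\<^sup>2) * (\<Lambda> * (norm d)\<^sup>2)"
    using up psd \<Lambda> by (intro mult_mono) auto
  also have "\<dots> = ((norm w) * (\<Lambda> * norm d))\<^sup>2"
    by (simp add: power2_eq_square algebra_simps)
  finally have "(norm w)\<^sup>2 \<le> norm w * (\<Lambda> * norm d)"
    by (rule power2_le_imp_le) (simp add: \<Lambda>)
  hence "norm w * norm w \<le> norm w * (\<Lambda> * norm d)"
    by (simp add: power2_eq_square)
  hence "norm w \<le> \<Lambda> * norm d"
    using \<Lambda> by (cases "norm w = 0") (auto simp: mult_le_cancel_left_pos)
  thus ?thesis by (simp add: w_def)
qed

lemma norm_matrix_le_entries:
  fixes A :: "real^'m^'n"
  assumes "\<And>i j. \<bar>A $ i $ j\<bar> \<le> c"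
  shows "norm A \<le> real CARD('n) * (real CARD('m) * c)"
proof -
  have "norm A \<le> (\<Sum>i\<in>UNIV. norm (A $ i))"
    unfolding norm_vec_def by (rule L2_set_le_sum) auto
  also have "\<dots> \<le> (\<Sum>i\<in>(UNIV::'n set). real CARD('m) * c)"
  proof (rule sum_mono)
    fix i
    have "norm (A $ i) \<le> (\<Sum>j\<in>UNIV. \<bar>A $ i $ j\<bar>)" by (rule norm_le_l1_cart)
    also have "\<dots> \<le> (\<Sum>j\<in>(UNIV::'m set). c)" using assms by (intro sum_mono) auto
    finally show "norm (A $ i) \<le> real CARD('m) * c" by simp
  qed
  finally show ?thesis by simp
qed

lemma tendsto_matrix_vector_mult:
  fixes A :: "nat \<Rightarrow> real^'m^'n"
  assumes "A \<longlonglongrightarrow> A0" "x \<longlonglongrightarrow> x0"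
  shows "(\<lambda>k. A k *v x k) \<longlonglongrightarrow> A0 *v x0"
  unfolding matrix_vector_mult_def
  by (intro tendsto_vec_lambda tendsto_sum tendsto_mult tendsto_vec_nth assms)

lemma tendsto_column:
  fixes A :: "nat \<Rightarrow> real^'m^'n"
  assumes "A \<longlonglongrightarrow> A0"
  shows "(\<lambda>k. column i (A k)) \<longlonglongrightarrow> column i A0"
  unfolding column_def by (intro tendsto_vec_lambda tendsto_vec_nth assms)

lemma tendsto_transpose:
  fixes A :: "nat \<Rightarrow> real^'m^'n"
  assumes "A \<longlonglongrightarrow> A0"
  shows "(\<lambda>k. transpose (A k)) \<longlonglongrightarrow> transpose A0"
  unfolding transpose_def by (intro tendsto_vec_lambda tendsto_vec_nth assms)

lemma quadratic_inequality_bound: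
  fixes m b C d e :: real
  assumes m: "0 < m" and b: "0 \<le> b" and d: "0 \<le> d" and e: "0 \<le> e"
    and h: "m * e\<^sup>2 \<le> b * d * e + C * d\<^sup>2"
  shows "e\<^sup>2 \<le> max ((2 * b / m)\<^sup>2) (2 * C / m) * d\<^sup>2"
proof (cases "e \<le> 2 * b * d / m")
  case True
  hence "e\<^sup>2 \<le> (2 * b / m)\<^sup>2 * d\<^sup>2"
    using e by (simp add: power_mono power_mult_distrib[symmetric])
  also have "\<dots> \<le> max ((2 * b / m)\<^sup>2) (2 * C / m) * d\<^sup>2"
    by (intro mult_right_mono) auto
  finally show ?thesis .
next
  case False
  hence "2 * b * d < m * e" using m by (simp add: field_simps)
  hence "2 * (b * d * e) \<le> m * e\<^sup>2"
    using e mult_right_mono[of "2 * b * d" "m * e" e] by (simp add: power2_eq_square algebra_simps)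
  hence "e\<^sup>2 \<le> 2 * C / m * d\<^sup>2"
    using h m by (simp add: field_simps)
  also have "\<dots> \<le> max ((2 * b / m)\<^sup>2) (2 * C / m) * d\<^sup>2"
    by (intro mult_right_mono) auto
  finally show ?thesis .
qed

section \<open>The subproblems\<close>

lemma Gfun_component:
  "Gfun g z s V L $ i = g s $ i + column i V \<bullet> (z - s) + (norm (z - s))\<^sup>2 / 2 * L $ i"
  by (simp add: Gfun_def vector_matrix_mult_def column_def inner_vec_def mult.commute)

lemma Gfun_self: "Gfun g s s V L = g s"
  by (simp add: Gfun_def)

lemma matrix_vector_mult_column_sum:
  fixes V :: "real^'m^'n"
  shows "V *v lam = (\<Sum>i\<in>UNIV. lam $ i *\<^sub>R column i V)"
  by (simp add: matrix_mult_sum scalar_mult_eq_scaleR)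

text \<open>For \<open>L \<ge> 0\<close> every component of \<open>Gfun g z s V L\<close> is convex in \<open>z\<close>; this is the
  gradient inequality of the convex function \<open>z \<mapsto> \<langle>\<lambda>, Gfun g z s V L\<rangle>\<close>, \<open>\<lambda> \<ge> 0\<close>.\<close>

lemma Gfun_above_tangent:
  fixes V :: "real^'m::finite^'n::finite" and lam L :: "real^'m"
  assumes lam: "\<forall>i. 0 \<le> lam $ i" and L: "\<forall>i. 0 \<le> L $ i"
  shows "lam \<bullet> Gfun g y s V L + (V *v lam + (L \<bullet> lam) *\<^sub>R (y - s)) \<bullet> (z - y)
           \<le> lam \<bullet> Gfun g z s V L"
proof -
  have sq: "(y - s) \<bullet> (z - y) \<le> ((norm (z - s))\<^sup>2 - (norm (y - s))\<^sup>2) / 2"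
  proof -
    have "(norm (z - s))\<^sup>2 = (norm (y - s))\<^sup>2 + 2 * ((y - s) \<bullet> (z - y)) + (norm (z - y))\<^sup>2"
      using dot_norm[of "y - s" "z - y"] by simp
    thus ?thesis by simp
  qed
  have "lam $ i * (Gfun g y s V L $ i + column i V \<bullet> (z - y) + L $ i * ((y - s) \<bullet> (z - y)))
      \<le> lam $ i * Gfun g z s V L $ i" for i
  proof -
    have "L $ i * ((y - s) \<bullet> (z - y)) \<le> L $ i * (((norm (z - s))\<^sup>2 - (norm (y - s))\<^sup>2) / 2)"
      using L sq by (intro mult_left_mono) auto
    hence "Gfun g y s V L $ i + column i V \<bullet> (z - y) + L $ i * ((y - s) \<bullet> (z - y)) \<le> Gfun g z s V L $ i"
      by (simp add: Gfun_component inner_diff_right algebra_simps diff_divide_distrib)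
    thus ?thesis using lam by (intro mult_left_mono) auto
  qed
  hence "(\<Sum>i\<in>UNIV. lam $ i * (Gfun g y s V L $ i + column i V \<bullet> (z - y) + L $ i * ((y - s) \<bullet> (z - y))))
      \<le> lam \<bullet> Gfun g z s V L"
    unfolding inner_vec_def by (intro sum_mono) simp
  moreover have "(\<Sum>i\<in>UNIV. lam $ i * (Gfun g y s V L $ i + column i V \<bullet> (z - y) + L $ i * ((y - s) \<bullet> (z - y))))
      = lam \<bullet> Gfun g y s V L + (V *v lam + (L \<bullet> lam) *\<^sub>R (y - s)) \<bullet> (z - y)"
  proof -
    have "(V *v lam) \<bullet> (z - y) = (\<Sum>i\<in>UNIV. lam $ i * (column i V \<bullet> (z - y)))"
      by (simp add: matrix_vector_mult_column_sum inner_sum_left)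
    moreover have "L \<bullet> lam = (\<Sum>i\<in>UNIV. lam $ i * L $ i)"
      by (simp add: inner_vec_def mult.commute)
    moreover have "lam \<bullet> Gfun g y s V L = (\<Sum>i\<in>UNIV. lam $ i * Gfun g y s V L $ i)"
      by (simp add: inner_vec_def)
    ultimately show ?thesis
      by (simp add: inner_add_left distrib_left sum.distrib sum_distrib_right mult.assoc)
  qed
  ultimately show ?thesis by simp
qed

lemma convex_Gfun_feasible:
  fixes V :: "real^'m::finite^'n::finite" and L :: "real^'m"
  assumes L: "\<forall>i. 0 \<le> L $ i"
  shows "convex {z. Gfun g z s V L \<in> nonpos_orthant}"
proof (rule convexI)
  fix a b :: "real^'n" and u v :: real
  assume a: "a \<in> {z. Gfun g z s V L \<in> nonpos_orthant}" and b: "b \<in> {z. Gfun g z s V L \<in> nonpos_orthant}"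
    and uv: "0 \<le> u" "0 \<le> v" "u + v = 1"
  define p where "p = u *\<^sub>R a + v *\<^sub>R b"
  have "Gfun g p s V L $ i \<le> 0" for i
  proof -
    define e :: "real^'m" where "e = axis i 1"
    define D where "D = V *v e + (L \<bullet> e) *\<^sub>R (p - s)"
    have e: "\<forall>j. 0 \<le> e $ j" by (simp add: e_def axis_def)
    have eG: "\<And>w. e \<bullet> w = w $ i" by (simp add: e_def inner_axis')
    have "Gfun g p s V L $ i + D \<bullet> (a - p) \<le> Gfun g a s V L $ i"
         "Gfun g p s V L $ i + D \<bullet> (b - p) \<le> Gfun g b s V L $ i"
      using Gfun_above_tangent[OF e L, of g p s V] by (simp_all add: eG D_def)
    hence "u * (Gfun g p s V L $ i + D \<bullet> (a - p)) + v * (Gfun g p s V L $ i + D \<bullet> (b - p))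
        \<le> u * Gfun g a s V L $ i + v * Gfun g b s V L $ i"
      using uv by (intro add_mono mult_left_mono) auto
    moreover have "u * (D \<bullet> (a - p)) + v * (D \<bullet> (b - p)) = 0"
    proof -
      have "u *\<^sub>R (a - p) + v *\<^sub>R (b - p) = p - (u + v) *\<^sub>R p"
        by (simp add: p_def algebra_simps)
      hence "u *\<^sub>R (a - p) + v *\<^sub>R (b - p) = 0"
        using uv by simp
      hence "D \<bullet> (u *\<^sub>R (a - p) + v *\<^sub>R (b - p)) = 0" by simp
      thus ?thesis by (simp add: inner_add_right)
    qed
    moreover have "u * Gfun g a s V L $ i + v * Gfun g b s V L $ i \<le> 0"
      using a b uv by (intro add_nonpos_nonpos mult_nonneg_nonpos) (auto simp: nonpos_orthant_def)
    ultimately show ?thesis using uv by (simp add: algebra_simps flip: distrib_right)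
  qed
  thus "u *\<^sub>R a + v *\<^sub>R b \<in> {z. Gfun g z s V L \<in> nonpos_orthant}"
    by (simp add: nonpos_orthant_def p_def)
qed

lemma tendsto_Gfun:
  fixes V :: "nat \<Rightarrow> real^'m::finite^'n::finite"
  assumes g: "isCont g p" and z: "z \<longlonglongrightarrow> p" and s: "s \<longlonglongrightarrow> p"
    and V: "V \<longlonglongrightarrow> V0" and L: "L \<longlonglongrightarrow> L0"
  shows "(\<lambda>k. Gfun g (z k) (s k) (V k) (L k)) \<longlonglongrightarrow> g p"
proof -
  have "(\<lambda>k. g (s k) + transpose (V k) *v (z k - s k) + ((norm (z k - s k))\<^sup>2 / 2) *\<^sub>R L k)
      \<longlonglongrightarrow> g p + transpose V0 *v (p - p) + ((norm (p - p))\<^sup>2 / 2) *\<^sub>R L0"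
    by (intro tendsto_intros tendsto_matrix_vector_mult tendsto_transpose
        isCont_tendsto_compose[OF g s] z s V L) simp
  thus ?thesis by (simp add: Gfun_def)
qed

lemma inner_le_sum_mult:
  fixes a w :: "real^'m"
  assumes "\<forall>i. 0 \<le> a $ i" "\<forall>i. w $ i \<le> c"
  shows "a \<bullet> w \<le> (\<Sum>i\<in>UNIV. a $ i) * c"
  unfolding inner_vec_def sum_distrib_right using assms by (intro sum_mono) (simp add: mult_left_mono)

lemma Fmodel_diff:
  fixes Q :: "real^'n::finite^'n"
  assumes sym: "transpose Q = Q"
  shows "Fmodel g0 \<phi> x \<xi> Q z - Fmodel g0 \<phi> x \<xi> Q w
           = (\<xi> + Q *v (w - x)) \<bullet> (z - w) + 1/2 * ((z - w) \<bullet> (Q *v (z - w))) + (\<phi> z - \<phi> w)"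
proof -
  have "(z - x) \<bullet> (Q *v (z - x))
      = (w - x) \<bullet> (Q *v (w - x)) + 2 * ((Q *v (w - x)) \<bullet> (z - w)) + (z - w) \<bullet> (Q *v (z - w))"
    using quadratic_form_add[OF sym, of "w - x" "z - w"] by simp
  thus ?thesis
    by (simp add: Fmodel_def inner_add_left inner_diff_right algebra_simps)
qed

lemma nonneg_of_nonneg_perturbations:
  fixes X c :: real
  assumes "\<And>t. 0 < t \<Longrightarrow> t \<le> 1 \<Longrightarrow> 0 \<le> X + t * c"
  shows "0 \<le> X"
proof -
  have "((\<lambda>t. X + t * c) \<longlongrightarrow> X + 0 * c) (at_right 0)"
    by (intro tendsto_intros)
  moreover have "eventually (\<lambda>t. t \<in> {0<..<1}) (at_right (0::real))"
    by (rule eventually_at_right_real) simp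
  hence "eventually (\<lambda>t. 0 \<le> X + t * c) (at_right 0)"
    by eventually_elim (use assms in auto)
  ultimately show ?thesis
    by (intro tendsto_lowerbound) auto
qed

lemma Fmodel_min_imp_linearized_min:
  fixes Q :: "real^'n::finite^'n"
  assumes C: "convex C" and xb: "xb \<in> C" and cvx: "convex_on UNIV \<phi>" and sym: "transpose Q = Q"
    and opt: "\<forall>z\<in>C. Fmodel g0 \<phi> x \<xi> Q xb \<le> Fmodel g0 \<phi> x \<xi> Q z"
    and z: "z \<in> C"
  shows "\<phi> xb \<le> (\<xi> + Q *v (xb - x)) \<bullet> (z - xb) + \<phi> z"
proof -
  define h where "h = z - xb"
  define b where "b = \<xi> + Q *v (xb - x)"
  have "0 \<le> (b \<bullet> h + \<phi> z - \<phi> xb) + t * (1/2 * (h \<bullet> (Q *v h)))" if t: "0 < t" "t \<le> 1" for t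
  proof -
    define zt where "zt = (1 - t) *\<^sub>R xb + t *\<^sub>R z"
    have zt_h: "zt - xb = t *\<^sub>R h" by (simp add: zt_def h_def algebra_simps)
    have "zt \<in> C" using C xb z t by (simp add: zt_def convex_def)
    hence "0 \<le> Fmodel g0 \<phi> x \<xi> Q zt - Fmodel g0 \<phi> x \<xi> Q xb" using opt by simp
    also have "\<dots> = t * (b \<bullet> h) + t\<^sup>2 * (1/2 * (h \<bullet> (Q *v h))) + (\<phi> zt - \<phi> xb)"
      by (simp add: Fmodel_diff[OF sym] zt_h b_def matrix_vector_mult_scaleR power2_eq_square)
    also have "\<phi> zt - \<phi> xb \<le> t * (\<phi> z - \<phi> xb)"
      using convex_onD[OF cvx, of t xb z] t by (simp add: zt_def algebra_simps)
    finally have "0 \<le> t * ((b \<bullet> h + \<phi> z - \<phi> xb) + t * (1/2 * (h \<bullet> (Q *v h))))"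
      by (simp add: power2_eq_square algebra_simps)
    thus ?thesis using t by (simp add: zero_le_mult_iff)
  qed
  hence "0 \<le> b \<bullet> h + \<phi> z - \<phi> xb"
    by (rule nonneg_of_nonneg_perturbations)
  thus ?thesis by (simp add: h_def b_def)
qed

lemma le_of_le_plus_multiples:
  fixes x y k :: real
  assumes k: "0 \<le> k" and le: "\<And>\<epsilon>. 0 < \<epsilon> \<Longrightarrow> x \<le> y + k * \<epsilon>"
  shows "x \<le> y"
proof (rule field_le_epsilon)
  fix e :: real assume e: "0 < e"
  have "0 < e / (k + 1)" using e k by simp
  hence "x \<le> y + k * (e / (k + 1))" by (rule le)
  also have "k * (e / (k + 1)) \<le> e"
    using e k by (simp add: field_simps)
  finally show "x \<le> y + e" by simp
qed

text \<open>Sum rule for a finite convex function and the indicator of a convex set, obtained by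
  separating the epigraph of \<open>\<phi>\<close> from the region below the affine minorant on \<open>C\<close>.\<close>

lemma convex_constrained_min_subgradient:
  fixes \<phi> :: "'a::euclidean_space \<Rightarrow> real"
  assumes C: "convex C" and xb: "xb \<in> C" and cvx: "convex_on UNIV \<phi>"
    and opt: "\<And>z. z \<in> C \<Longrightarrow> \<phi> xb \<le> b \<bullet> (z - xb) + \<phi> z"
  obtains a where "\<And>y. \<phi> xb + a \<bullet> (y - xb) \<le> \<phi> y" and "\<And>z. z \<in> C \<Longrightarrow> 0 \<le> (a + b) \<bullet> (z - xb)"
proof -
  define A :: "('a \<times> real) set" where "A = epigraph UNIV \<phi>"
  define B :: "('a \<times> real) set" where "B = (C \<times> UNIV) \<inter> {p. (b, 1) \<bullet> p < b \<bullet> xb + \<phi> xb}"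
  have "convex A" using cvx by (simp add: A_def convex_epigraph)
  moreover have "convex B"
    unfolding B_def by (intro convex_Int convex_Times C convex_UNIV convex_halfspace_lt)
  moreover have "(xb, \<phi> xb) \<in> A" "(xb, \<phi> xb - 1) \<in> B"
    using xb by (auto simp: A_def B_def mem_epigraph)
  moreover have "A \<inter> B = {}"
  proof (safe)
    fix z t assume "(z, t) \<in> A" "(z, t) \<in> B"
    hence "\<phi> z \<le> t" "z \<in> C" "b \<bullet> z + t < b \<bullet> xb + \<phi> xb"
      by (auto simp: A_def B_def mem_epigraph)
    thus "(z, t) \<in> {}" using opt[of z] by (simp add: inner_diff_right)
  qed
  ultimately obtain as c where "as \<noteq> 0" and sepA: "\<forall>p\<in>A. as \<bullet> p \<le> c" and sepB: "\<forall>p\<in>B. c \<le> as \<bullet> p"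
    using separating_hyperplane_sets[of A B] by blast
  then obtain a s where as: "as = (a, s)" and a_s: "(a, s) \<noteq> 0" by (cases as) auto
  have above: "a \<bullet> z + s * t \<le> c" if "\<phi> z \<le> t" for z t
  proof -
    have "(z, t) \<in> A" using that by (simp add: A_def mem_epigraph)
    thus ?thesis using sepA by (auto simp: as)
  qed
  have below: "c \<le> a \<bullet> z + s * t" if "z \<in> C" "b \<bullet> z + t < b \<bullet> xb + \<phi> xb" for z t
  proof -
    have "(z, t) \<in> B" using that by (simp add: B_def)
    thus ?thesis using sepB by (auto simp: as)
  qed
  have s_le: "s \<le> 0"
  proof (rule ccontr)
    assume "\<not> s \<le> 0"
    hence "0 < s" by simp
    define r where "r = (\<bar>c - a \<bullet> xb - s * \<phi> xb\<bar> + 1) / s"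
    have "a \<bullet> xb + s * \<phi> xb + s * r \<le> c"
      using above[of xb "\<phi> xb + r"] \<open>0 < s\<close> by (simp add: r_def distrib_left)
    moreover have "s * r = \<bar>c - a \<bullet> xb - s * \<phi> xb\<bar> + 1" using \<open>0 < s\<close> by (simp add: r_def)
    ultimately show False by linarith
  qed
  have c_eq: "c = a \<bullet> xb + s * \<phi> xb"
  proof (rule antisym)
    show "a \<bullet> xb + s * \<phi> xb \<le> c" using above[of xb "\<phi> xb"] by simp
    show "c \<le> a \<bullet> xb + s * \<phi> xb"
    proof (rule le_of_le_plus_multiples[of "- s"])
      fix \<epsilon> :: real assume "0 < \<epsilon>"
      thus "c \<le> a \<bullet> xb + s * \<phi> xb + - s * \<epsilon>"
        using below[OF xb, of "\<phi> xb - \<epsilon>"] by (simp add: algebra_simps)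
    qed (use s_le in simp)
  qed
  have "s \<noteq> 0"
  proof
    assume "s = 0"
    hence "a \<noteq> 0" using a_s by (simp add: zero_prod_def)
    have "a \<bullet> (xb + a) \<le> c" using above[of "xb + a" "\<phi> (xb + a)"] \<open>s = 0\<close> by simp
    hence "a \<bullet> a \<le> 0" using c_eq \<open>s = 0\<close> by (simp add: inner_add_right)
    thus False using \<open>a \<noteq> 0\<close> inner_gt_zero_iff[of a] by linarith
  qed
  hence s: "s < 0" using s_le by simp
  show ?thesis
  proof (rule that[of "(- 1 / s) *\<^sub>R a"])
    fix y
    have "a \<bullet> (y - xb) \<le> - s * (\<phi> y - \<phi> xb)"
      using above[of y "\<phi> y"] c_eq by (simp add: inner_diff_right algebra_simps)
    thus "\<phi> xb + ((- 1 / s) *\<^sub>R a) \<bullet> (y - xb) \<le> \<phi> y"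
      using s by (simp add: field_simps)
  next
    fix z assume z: "z \<in> C"
    have "0 \<le> a \<bullet> (z - xb) - s * (b \<bullet> (z - xb))"
    proof (rule le_of_le_plus_multiples[of "- s"])
      fix \<epsilon> :: real assume "0 < \<epsilon>"
      hence "c \<le> a \<bullet> z + s * (\<phi> xb - b \<bullet> (z - xb) - \<epsilon>)"
        by (intro below[OF z]) (simp add: inner_diff_right)
      thus "0 \<le> a \<bullet> (z - xb) - s * (b \<bullet> (z - xb)) + - s * \<epsilon>"
        using c_eq by (simp add: inner_diff_right algebra_simps)
    qed (use s in simp)
    hence "0 \<le> (- 1 / s) * (a \<bullet> (z - xb) - s * (b \<bullet> (z - xb)))"
      using s by (intro mult_nonneg_nonneg) auto
    also have "\<dots> = ((- 1 / s) *\<^sub>R a + b) \<bullet> (z - xb)"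
      using s by (simp add: inner_add_left inner_diff_left right_diff_distrib)
    finally show "0 \<le> ((- 1 / s) *\<^sub>R a + b) \<bullet> (z - xb)" .
  qed
qed

lemma Fmodel_min_KKT:
  fixes Q :: "real^'n::finite^'n"
  assumes C: "convex C" and xb: "xb \<in> C" and cvx: "convex_on UNIV \<phi>" and sym: "transpose Q = Q"
    and opt: "\<forall>z\<in>C. Fmodel g0 \<phi> x \<xi> Q xb \<le> Fmodel g0 \<phi> x \<xi> Q z"
  shows "\<exists>a. (\<forall>y. \<phi> xb + a \<bullet> (y - xb) \<le> \<phi> y) \<and> - (a + (\<xi> + Q *v (xb - x))) \<in> normal_cone C xb"
proof -
  obtain a where sub: "\<And>y. \<phi> xb + a \<bullet> (y - xb) \<le> \<phi> y"
    and nc: "\<And>z. z \<in> C \<Longrightarrow> 0 \<le> (a + (\<xi> + Q *v (xb - x))) \<bullet> (z - xb)"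
    using convex_constrained_min_subgradient[OF C xb cvx
        Fmodel_min_imp_linearized_min[OF C xb cvx sym opt]] by blast
  have "- (a + (\<xi> + Q *v (xb - x))) \<in> {v. \<forall>z\<in>C. v \<bullet> (z - xb) \<le> 0}"
    using nc by (simp only: mem_Collect_eq inner_minus_left neg_le_0_iff_le) blast
  hence "- (a + (\<xi> + Q *v (xb - x))) \<in> normal_cone C xb"
    using normal_cone_convex[OF C xb] by blast
  thus ?thesis using sub by blast
qed

text \<open>Lower bound for the growth of the model away from a point \<open>y\<close> at which \<open>(v, \<lambda>)\<close> is an
  approximate KKT pair with residual \<open>r\<close>.\<close>

lemma Fmodel_growth:
  fixes Q :: "real^'n::finite^'n" and V :: "real^'m::finite^'n"
  assumes sym: "transpose Q = Q" and Qlo: "\<And>d. \<mu> * (norm d)\<^sup>2 \<le> d \<bullet> (Q *v d)"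
    and lam: "\<forall>i. 0 \<le> lam $ i" and L: "\<forall>i. 0 \<le> L $ i"
    and sub: "\<And>w. \<phi> y + v \<bullet> (w - y) \<le> \<phi> w"
  shows "(\<xi> + Q *v (y - x) + v + V *v lam + (L \<bullet> lam) *\<^sub>R (y - x)) \<bullet> (z - y)
           + lam \<bullet> Gfun g y x V L - lam \<bullet> Gfun g z x V L + \<mu> / 2 * (norm (z - y))\<^sup>2
         \<le> Fmodel g0 \<phi> x \<xi> Q z - Fmodel g0 \<phi> x \<xi> Q y"
proof -
  have "Fmodel g0 \<phi> x \<xi> Q z - Fmodel g0 \<phi> x \<xi> Q y
      = (\<xi> + Q *v (y - x)) \<bullet> (z - y) + 1/2 * ((z - y) \<bullet> (Q *v (z - y))) + (\<phi> z - \<phi> y)"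
    by (rule Fmodel_diff[OF sym])
  moreover have "lam \<bullet> Gfun g y x V L + (V *v lam + (L \<bullet> lam) *\<^sub>R (y - x)) \<bullet> (z - y)
      \<le> lam \<bullet> Gfun g z x V L"
    by (rule Gfun_above_tangent[OF lam L])
  moreover have "v \<bullet> (z - y) \<le> \<phi> z - \<phi> y" using sub[of z] by simp
  moreover have "\<mu> / 2 * (norm (z - y))\<^sup>2 \<le> 1/2 * ((z - y) \<bullet> (Q *v (z - y)))"
    using Qlo[of "z - y"] by simp
  ultimately show ?thesis
    by (simp add: inner_add_left)
qed

section \<open>Convergence of iMBA\<close>

locale imba =
  fixes g0 :: "real^'n::finite \<Rightarrow> real"
    and g :: "real^'n \<Rightarrow> real^'m::finite"
    and \<phi> :: "real^'n \<Rightarrow> real"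
    and Oset :: "(real^'n) set"
    and \<mu>min \<mu>max Lmin Lmax M \<beta>C \<beta>S \<alpha> \<tau> :: real
    and x \<xi> :: "nat \<Rightarrow> real^'n"
    and V :: "nat \<Rightarrow> real^'m^'n"
    and jk :: "nat \<Rightarrow> nat"
    and \<mu> :: "nat \<Rightarrow> nat \<Rightarrow> real"
    and Q :: "nat \<Rightarrow> nat \<Rightarrow> real^'n^'n"
    and L :: "nat \<Rightarrow> nat \<Rightarrow> real^'m"
    and y v xbar :: "nat \<Rightarrow> nat \<Rightarrow> real^'n"
    and lam :: "nat \<Rightarrow> nat \<Rightarrow> real^'m"
  assumes Gamma_sub: "feasible g \<subseteq> Oset"
    and g0_reg: "\<forall>z\<in>Oset. loc_lipschitz_at g0 z \<and> upper_C2_at g0 z"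
    and g_reg: "\<forall>i z. loc_lipschitz_at (\<lambda>w. g w $ i) z \<and> upper_C2_at (\<lambda>w. g w $ i) z"
    and phi_convex: "convex_on UNIV \<phi>"
    and F_bdd: "\<exists>c. \<forall>z\<in>feasible g. c \<le> g0 z + \<phi> z"
    and mu_min_pos: "0 < \<mu>min" and mu_min_le_max: "\<mu>min \<le> \<mu>max" and L_min_pos: "0 < Lmin"
    and M_pos: "0 < M" and beta_C_pos: "0 < \<beta>C" and beta_S_pos: "0 < \<beta>S"
    and alpha_pos: "0 < \<alpha>" and tau_gt_1: "1 < \<tau>"
    and x0: "x 0 \<in> feasible g"
    and xi_sub: "\<forall>k. \<xi> k \<in> limiting_subdiff g0 (x k)"
    and V_sub: "\<forall>k. V k \<in> subdiff_vec g (x k)"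
    and mu0: "\<forall>k. \<mu>min \<le> \<mu> k 0 \<and> \<mu> k 0 \<le> \<mu>max"
    and L0: "\<forall>k i. Lmin \<le> L k 0 $ i \<and> L k 0 $ i \<le> Lmax"
    and Q_bnd: "\<forall>k j. j \<le> jk k \<longrightarrow> transpose (Q k j) = Q k j \<and>
                  (\<forall>d. \<mu> k j * (norm d)\<^sup>2 \<le> d \<bullet> (Q k j *v d) \<and>
                       d \<bullet> (Q k j *v d) \<le> (\<mu> k j + M) * (norm d)\<^sup>2)"
    and xbar_min: "\<forall>k j. j \<le> jk k \<longrightarrow>
                  Gfun g (xbar k j) (x k) (V k) (L k j) \<in> nonpos_orthant \<and>
                  (\<forall>z. Gfun g z (x k) (V k) (L k j) \<in> nonpos_orthant \<longrightarrow>
                       Fmodel g0 \<phi> (x k) (\<xi> k) (Q k j) (xbar k j) \<le> Fmodel g0 \<phi> (x k) (\<xi> k) (Q k j) z)"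
    and inexact: "\<forall>k j. j \<le> jk k \<longrightarrow>
                  Fmodel g0 \<phi> (x k) (\<xi> k) (Q k j) (y k j) \<le> Fmodel g0 \<phi> (x k) (\<xi> k) (Q k j) (x k) \<and>
                  v k j \<in> limiting_subdiff \<phi> (y k j) \<and>
                  (\<forall>i. 0 \<le> lam k j $ i) \<and>
                  max 0 (- (lam k j \<bullet> Gfun g (y k j) (x k) (V k) (L k j))) +
                    infnorm (\<chi> i. max 0 (Gfun g (y k j) (x k) (V k) (L k j) $ i))
                    \<le> \<beta>C / 2 * (norm (y k j - x k))\<^sup>2 \<and>
                  norm (\<xi> k + Q k j *v (y k j - x k) + v k j + V k *v lam k j
                        + (L k j \<bullet> lam k j) *\<^sub>R (y k j - x k))
                    \<le> \<beta>S * norm (y k j - x k)"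
    and reject: "\<forall>k j. j < jk k \<longrightarrow> \<not> (g (y k j) \<in> nonpos_orthant \<and>
                  Fobj g0 g \<phi> (y k j) \<le> Fobj g0 g \<phi> (x k) - ereal (\<alpha> / 2 * (norm (y k j - x k))\<^sup>2))"
    and accept: "\<forall>k. g (y k (jk k)) \<in> nonpos_orthant \<and>
                  Fobj g0 g \<phi> (y k (jk k)) \<le> Fobj g0 g \<phi> (x k) - ereal (\<alpha> / 2 * (norm (y k (jk k) - x k))\<^sup>2)"
    and update: "\<forall>k j. j < jk k \<longrightarrow>
                  (g (y k j) \<notin> nonpos_orthant \<longrightarrow> L k (Suc j) = \<tau> *\<^sub>R L k j \<and> \<mu> k (Suc j) = \<mu> k j) \<and>
                  (g (y k j) \<in> nonpos_orthant \<longrightarrow> L k (Suc j) = L k j \<and> \<mu> k (Suc j) = \<tau> * \<mu> k j)"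
    and x_next: "\<forall>k. x (Suc k) = y k (jk k)"
    and x_bounded: "bounded (range x)"
    and BMP_cluster_points: "\<forall>p. cluster_point (\<lambda>k. ((x k, L k (jk k), V k, \<xi> k, Q k (jk k)), xbar k (jk k))) p
                  \<longrightarrow> partial_BMP g (fst p) (snd p)"
begin

definition "fval k = g0 (x k) + \<phi> (x k)"
definition "step k = norm (x (Suc k) - x k)"

lemma g_isCont: "isCont g z"
proof -
  have "isCont (\<lambda>w. g w $ i) z" for i
    by (rule loc_lipschitz_at_imp_isCont) (use g_reg in simp)
  thus ?thesis unfolding isCont_def by (rule vec_tendstoI)
qed

lemma closed_feasible: "closed (feasible g)"
proof -
  have "feasible g = g -` nonpos_orthant" by (auto simp: feasible_def)
  thus ?thesis by (simp add: continuous_closed_vimage[OF closed_nonpos_orthant g_isCont])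
qed

lemma phi_isCont: "isCont \<phi> z"
  using convex_on_continuous[OF open_UNIV phi_convex] by (simp add: continuous_on_eq_continuous_at)

lemma g0_isCont: "z \<in> feasible g \<Longrightarrow> isCont g0 z"
  using g0_reg Gamma_sub by (auto intro: loc_lipschitz_at_imp_isCont)

lemma iterate_feasible: "x k \<in> feasible g"
proof (induction k)
  case 0
  show ?case by (rule x0)
next
  case (Suc k)
  show ?case using accept x_next by (simp add: feasible_def)
qed

lemma Fobj_iterate: "Fobj g0 g \<phi> (x k) = ereal (fval k)"
  using iterate_feasible by (simp add: Fobj_def fval_def feasible_def)

lemma fval_descent: "fval (Suc k) \<le> fval k - \<alpha> / 2 * (step k)\<^sup>2"
proof -
  have "Fobj g0 g \<phi> (x (Suc k)) \<le> Fobj g0 g \<phi> (x k) - ereal (\<alpha> / 2 * (step k)\<^sup>2)"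
    using accept x_next by (simp add: step_def)
  thus ?thesis by (simp add: Fobj_iterate)
qed

lemma fval_convergent: "convergent fval"
proof -
  obtain c where "\<forall>z\<in>feasible g. c \<le> g0 z + \<phi> z" using F_bdd by blast
  hence lb: "\<forall>k. c \<le> fval k" using iterate_feasible by (simp add: fval_def)
  have dec: "decseq fval"
  proof (rule decseq_SucI)
    fix k
    have "0 \<le> \<alpha> / 2 * (step k)\<^sup>2" using alpha_pos by simp
    thus "fval (Suc k) \<le> fval k" using fval_descent[of k] by linarith
  qed
  obtain l where "fval \<longlonglongrightarrow> l" "\<forall>i. l \<le> fval i" by (rule decseq_convergent[OF dec lb])
  thus ?thesis by (blast intro: convergentI)
qed

lemma step_tendsto_zero: "step \<longlonglongrightarrow> 0"
proof -
  have c: "fval \<longlonglongrightarrow> lim fval"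
    using fval_convergent by (simp add: convergent_LIMSEQ_iff)
  have "(\<lambda>k. 2 / \<alpha> * (fval k - fval (Suc k))) \<longlonglongrightarrow> 2 / \<alpha> * (lim fval - lim fval)"
    by (intro tendsto_mult tendsto_const tendsto_diff c LIMSEQ_Suc[OF c])
  hence lim: "(\<lambda>k. 2 / \<alpha> * (fval k - fval (Suc k))) \<longlonglongrightarrow> 0" by simp
  have "\<forall>k. norm ((step k)\<^sup>2) \<le> 2 / \<alpha> * (fval k - fval (Suc k))"
  proof
    fix k
    have "\<alpha> / 2 * (step k)\<^sup>2 \<le> fval k - fval (Suc k)" using fval_descent[of k] by linarith
    thus "norm ((step k)\<^sup>2) \<le> 2 / \<alpha> * (fval k - fval (Suc k))" using alpha_pos by (simp add: field_simps)
  qed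
  hence "(\<lambda>k. (step k)\<^sup>2) \<longlonglongrightarrow> 0" by (rule Lim_null_comparison[OF always_eventually lim])
  hence "(\<lambda>k. sqrt ((step k)\<^sup>2)) \<longlonglongrightarrow> sqrt 0" by (rule tendsto_real_sqrt)
  thus ?thesis by (simp add: step_def[abs_def])
qed

lemma mu_ge_min: "j \<le> jk k \<Longrightarrow> \<mu>min \<le> \<mu> k j"
proof (induction j)
  case 0
  show ?case using mu0 by blast
next
  case (Suc j)
  hence "\<mu>min \<le> \<mu> k j" and j: "j < jk k" by auto
  moreover have "\<mu> k j \<le> \<mu> k (Suc j)"
  proof (cases "g (y k j) \<in> nonpos_orthant")
    case True
    hence "\<mu> k (Suc j) = \<tau> * \<mu> k j" using update j by blast
    moreover have "1 * \<mu> k j \<le> \<tau> * \<mu> k j"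
      using \<open>\<mu>min \<le> \<mu> k j\<close> mu_min_pos tau_gt_1 by (intro mult_right_mono) auto
    ultimately show ?thesis by simp
  next
    case False
    thus ?thesis using update j by simp
  qed
  ultimately show ?case by linarith
qed

lemma Q_lower: "j \<le> jk k \<Longrightarrow> \<mu>min * (norm d)\<^sup>2 \<le> d \<bullet> (Q k j *v d)"
proof -
  assume j: "j \<le> jk k"
  have "\<mu>min * (norm d)\<^sup>2 \<le> \<mu> k j * (norm d)\<^sup>2"
    using mu_ge_min[OF j] by (rule mult_right_mono) simp
  also have "\<dots> \<le> d \<bullet> (Q k j *v d)" using Q_bnd j by blast
  finally show ?thesis .
qed

lemma Q_psd: "j \<le> jk k \<Longrightarrow> 0 \<le> d \<bullet> (Q k j *v d)"
proof -
  assume "j \<le> jk k"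
  moreover have "0 \<le> \<mu>min * (norm d)\<^sup>2" using mu_min_pos by simp
  ultimately show ?thesis using Q_lower by (meson order_trans)
qed

subsection \<open>Bounds on the iterates and on the parameters of the inner loop\<close>

definition "Rx = (SOME R. 0 \<le> R \<and> (\<forall>k. norm (x k) \<le> R))"

lemma Rx: "0 \<le> Rx" "norm (x k) \<le> Rx"
proof -
  obtain R0 where "\<forall>k. norm (x k) \<le> R0" using x_bounded unfolding bounded_iff by auto
  hence "\<exists>R. 0 \<le> R \<and> (\<forall>k. norm (x k) \<le> R)"
    by (intro exI[of _ "max R0 0"]) (auto intro: order_trans)
  from someI_ex[OF this] show "0 \<le> Rx" "norm (x k) \<le> Rx" unfolding Rx_def by auto
qed

definition "phi_bound r = (SOME B. \<forall>z\<in>cball 0 r. \<bar>\<phi> z\<bar> \<le> B)"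

lemma phi_bound: "norm z \<le> r \<Longrightarrow> \<bar>\<phi> z\<bar> \<le> phi_bound r"
proof -
  have "continuous_on UNIV \<phi>" by (rule convex_on_continuous[OF open_UNIV phi_convex])
  hence "bounded (\<phi> ` cball 0 r)"
    by (intro compact_imp_bounded compact_continuous_image compact_cball)
      (auto intro: continuous_on_subset)
  then obtain B where "\<forall>t\<in>\<phi> ` cball 0 r. norm t \<le> B" unfolding bounded_iff by blast
  hence "\<exists>B. \<forall>z\<in>cball 0 r. \<bar>\<phi> z\<bar> \<le> B" by auto
  from someI_ex[OF this] show "norm z \<le> r \<Longrightarrow> \<bar>\<phi> z\<bar> \<le> phi_bound r"
    unfolding phi_bound_def by simp
qed

lemma phi_bound_nonneg: "0 \<le> r \<Longrightarrow> 0 \<le> phi_bound r"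
  using phi_bound[of 0 r] by simp

definition "Kxi = (SOME K. 0 \<le> K \<and> (\<forall>k. norm (\<xi> k) \<le> K))"

lemma Kxi: "0 \<le> Kxi" "norm (\<xi> k) \<le> Kxi"
proof -
  have S: "compact (feasible g \<inter> cball 0 Rx)"
    using closed_feasible by (intro closed_Int_compact) auto
  have "\<forall>q\<in>feasible g \<inter> cball 0 Rx. loc_lipschitz_at g0 q \<and> upper_C2_at g0 q"
    using g0_reg Gamma_sub by blast
  then obtain \<rho> K where "0 \<le> \<rho>" "0 \<le> K" and K: "uniform_upper_C2_on (feasible g \<inter> cball 0 Rx) g0 \<rho> K"
    by (rule uniform_upper_C2_on_compact[OF S])
  have "norm (\<xi> k) \<le> K" for k
    using uniform_upper_C2_onD(1)[OF K _ xi_sub[rule_format]] iterate_feasible Rx(2) by simp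
  hence "\<exists>K. 0 \<le> K \<and> (\<forall>k. norm (\<xi> k) \<le> K)" using \<open>0 \<le> K\<close> by blast
  from someI_ex[OF this] show "0 \<le> Kxi" "norm (\<xi> k) \<le> Kxi" unfolding Kxi_def by auto
qed

definition "Dmax = 2 * (Kxi + 2 * phi_bound (Rx + 1)) / \<mu>min"

lemma Dmax_nonneg: "0 \<le> Dmax"
  using Kxi(1) phi_bound_nonneg[of "Rx + 1"] Rx(1) mu_min_pos by (simp add: Dmax_def)

text \<open>Any point at which the model is not larger than at \<open>x k\<close> lies within \<open>Dmax\<close> of \<open>x k\<close>:
  the model grows quadratically with modulus \<open>\<mu>min\<close> and decreases at most linearly.\<close>

lemma model_decrease_near:
  assumes j: "j \<le> jk k"
    and dec: "Fmodel g0 \<phi> (x k) (\<xi> k) (Q k j) z \<le> Fmodel g0 \<phi> (x k) (\<xi> k) (Q k j) (x k)"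
  shows "norm (z - x k) \<le> Dmax"
proof -
  define n where "n = norm (z - x k)"
  define B where "B = phi_bound (Rx + 1)"
  have "- (\<xi> k \<bullet> (z - x k)) \<le> Kxi * n"
    using Cauchy_Schwarz_ineq2[of "\<xi> k" "z - x k"] mult_right_mono[OF Kxi(2)[of k] norm_ge_zero[of "z - x k"]]
      abs_ge_minus_self[of "\<xi> k \<bullet> (z - x k)"]
    unfolding n_def by linarith
  moreover have "\<phi> (x k) - 2 * B * norm (z - x k) \<le> \<phi> z"
  proof (rule convex_on_lower_linear_bound[OF phi_convex])
    fix w assume "w \<in> cball (x k) 1"
    hence "norm w \<le> Rx + 1"
      using Rx(2)[of k] norm_triangle_sub[of w "x k"] by (simp add: dist_norm norm_minus_commute)
    thus "\<bar>\<phi> w\<bar> \<le> B" unfolding B_def by (rule phi_bound)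
  qed
  moreover have "\<mu>min * n\<^sup>2 \<le> (z - x k) \<bullet> (Q k j *v (z - x k))"
    using Q_lower[OF j] by (simp add: n_def)
  moreover have "\<xi> k \<bullet> (z - x k) + 1/2 * ((z - x k) \<bullet> (Q k j *v (z - x k))) + \<phi> z \<le> \<phi> (x k)"
    using dec by (simp add: Fmodel_def)
  ultimately have "n * (\<mu>min / 2 * n) \<le> n * (Kxi + 2 * B)"
    unfolding n_def[symmetric]
    by (simp add: power2_eq_square algebra_simps)
  hence "\<mu>min / 2 * n \<le> Kxi + 2 * B \<or> n = 0"
    by (cases "n = 0") (auto simp: n_def)
  thus ?thesis
    using mu_min_pos Kxi(1) phi_bound_nonneg[of "Rx + 1"] Rx(1)
    by (auto simp: n_def B_def Dmax_def field_simps)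
qed

definition "R1 = Rx + Dmax"

lemma in_ball_R1: "norm (z - x k) \<le> Dmax \<Longrightarrow> z \<in> cball 0 R1"
  using Rx(2)[of k] norm_triangle_sub[of z "x k"] by (simp add: R1_def)

lemma iterate_in_ball: "x k \<in> cball 0 R1"
  using in_ball_R1[of "x k" k] Dmax_nonneg by simp

lemma trial_near: "j \<le> jk k \<Longrightarrow> norm (y k j - x k) \<le> Dmax"
  using model_decrease_near inexact by blast

lemma xbar_near: "j \<le> jk k \<Longrightarrow> norm (xbar k j - x k) \<le> Dmax"
proof -
  assume j: "j \<le> jk k"
  have "Gfun g (x k) (x k) (V k) (L k j) \<in> nonpos_orthant"
    using iterate_feasible[of k] by (simp add: Gfun_self feasible_def)
  hence "Fmodel g0 \<phi> (x k) (\<xi> k) (Q k j) (xbar k j) \<le> Fmodel g0 \<phi> (x k) (\<xi> k) (Q k j) (x k)"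
    using xbar_min j by blast
  thus ?thesis by (rule model_decrease_near[OF j])
qed

definition "rho0 = (SOME \<rho>. 0 \<le> \<rho> \<and> (\<exists>K. uniform_upper_C2_on (feasible g \<inter> cball 0 R1) g0 \<rho> K))"

lemma rho0: "0 \<le> rho0" "\<exists>K. uniform_upper_C2_on (feasible g \<inter> cball 0 R1) g0 rho0 K"
proof -
  have S: "compact (feasible g \<inter> cball 0 R1)"
    using closed_feasible by (intro closed_Int_compact) auto
  have "\<forall>q\<in>feasible g \<inter> cball 0 R1. loc_lipschitz_at g0 q \<and> upper_C2_at g0 q"
    using g0_reg Gamma_sub by blast
  then obtain \<rho> K where "0 \<le> \<rho>" "0 \<le> K" "uniform_upper_C2_on (feasible g \<inter> cball 0 R1) g0 \<rho> K"
    by (rule uniform_upper_C2_on_compact[OF S])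
  hence "\<exists>\<rho>. 0 \<le> \<rho> \<and> (\<exists>K. uniform_upper_C2_on (feasible g \<inter> cball 0 R1) g0 \<rho> K)" by blast
  from someI_ex[OF this] show "0 \<le> rho0" "\<exists>K. uniform_upper_C2_on (feasible g \<inter> cball 0 R1) g0 rho0 K"
    unfolding rho0_def by auto
qed

definition "Kg = (SOME K. 0 \<le> K \<and> (\<exists>\<rho>\<ge>0. \<forall>i. uniform_upper_C2_on (cball 0 R1) (\<lambda>w. g w $ i) \<rho> K))"
definition "rhog = (SOME \<rho>. 0 \<le> \<rho> \<and> (\<forall>i. uniform_upper_C2_on (cball 0 R1) (\<lambda>w. g w $ i) \<rho> Kg))"

lemma rhog: "0 \<le> rhog" "0 \<le> Kg" "uniform_upper_C2_on (cball 0 R1) (\<lambda>w. g w $ i) rhog Kg"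
proof -
  have "\<forall>i. \<forall>q\<in>cball 0 R1. loc_lipschitz_at (\<lambda>w. g w $ i) q \<and> upper_C2_at (\<lambda>w. g w $ i) q"
    using g_reg by simp
  then obtain \<rho> K where "0 \<le> \<rho>" "0 \<le> K" "\<forall>i. uniform_upper_C2_on (cball 0 R1) (\<lambda>w. g w $ i) \<rho> K"
    by (rule uniform_upper_C2_on_compact_components[OF compact_cball])
  hence "\<exists>K. 0 \<le> K \<and> (\<exists>\<rho>\<ge>0. \<forall>i. uniform_upper_C2_on (cball 0 R1) (\<lambda>w. g w $ i) \<rho> K)" by blast
  from someI_ex[OF this] have "0 \<le> Kg" "\<exists>\<rho>\<ge>0. \<forall>i. uniform_upper_C2_on (cball 0 R1) (\<lambda>w. g w $ i) \<rho> Kg"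
    unfolding Kg_def[symmetric] by auto
  from someI_ex[OF this(2)[unfolded Bex_def]] \<open>0 \<le> Kg\<close>
  show "0 \<le> rhog" "0 \<le> Kg" "uniform_upper_C2_on (cball 0 R1) (\<lambda>w. g w $ i) rhog Kg"
    unfolding rhog_def[symmetric] by auto
qed

lemma trial_G_le:
  assumes j: "j \<le> jk k"
  shows "Gfun g (y k j) (x k) (V k) (L k j) $ i \<le> \<beta>C / 2 * (norm (y k j - x k))\<^sup>2"
    and "- (lam k j \<bullet> Gfun g (y k j) (x k) (V k) (L k j)) \<le> \<beta>C / 2 * (norm (y k j - x k))\<^sup>2"
proof -
  define G where "G = Gfun g (y k j) (x k) (V k) (L k j)"
  have I: "max 0 (- (lam k j \<bullet> G)) + infnorm (\<chi> i. max 0 (G $ i)) \<le> \<beta>C / 2 * (norm (y k j - x k))\<^sup>2"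
    using inexact j by (simp add: G_def)
  have "G $ i \<le> \<bar>(\<chi> i. max 0 (G $ i)) $ i\<bar>" by simp
  also have "\<dots> \<le> infnorm (\<chi> i. max 0 (G $ i))" by (rule component_le_infnorm_cart)
  finally show "G $ i \<le> \<beta>C / 2 * (norm (y k j - x k))\<^sup>2"
    using I infnorm_pos_le[of "\<chi> i. max 0 (G $ i)"] by linarith
  show "- (lam k j \<bullet> G) \<le> \<beta>C / 2 * (norm (y k j - x k))\<^sup>2"
    using I infnorm_pos_le[of "\<chi> i. max 0 (G $ i)"] by linarith
qed

text \<open>A feasible trial point is rejected only while \<open>\<mu> k j < rho0 + \<alpha>\<close>, an infeasible one only
  while the curvature vector \<open>L k j\<close> has a component below \<open>\<beta>C + rhog\<close>; hence the
  updates by the factor \<open>\<tau>\<close> stop below \<open>\<tau> (rho0 + \<alpha>)\<close> resp. \<open>\<tau> (\<beta>C + rhog)\<close>.\<close>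

lemma mu_small_if_rejected_feasible:
  assumes j: "j < jk k" and feas: "g (y k j) \<in> nonpos_orthant"
  shows "\<mu> k j < rho0 + \<alpha>"
proof (rule ccontr)
  assume "\<not> \<mu> k j < rho0 + \<alpha>"
  hence mu: "rho0 + \<alpha> \<le> \<mu> k j" by simp
  have j': "j \<le> jk k" using j by simp
  obtain K where K: "uniform_upper_C2_on (feasible g \<inter> cball 0 R1) g0 rho0 K" using rho0 by blast
  define n where "n = norm (y k j - x k)"
  have "g0 (y k j) \<le> g0 (x k) + \<xi> k \<bullet> (y k j - x k) + rho0 / 2 * n\<^sup>2"
    using uniform_upper_C2_onD(2)[OF K _ xi_sub[rule_format]] iterate_feasible iterate_in_ball
      in_ball_R1[OF trial_near[OF j']] feas by (simp add: feasible_def n_def)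
  moreover have "Fmodel g0 \<phi> (x k) (\<xi> k) (Q k j) (y k j) \<le> Fmodel g0 \<phi> (x k) (\<xi> k) (Q k j) (x k)"
    using inexact j' by blast
  hence "\<xi> k \<bullet> (y k j - x k) + 1/2 * ((y k j - x k) \<bullet> (Q k j *v (y k j - x k))) + \<phi> (y k j) \<le> \<phi> (x k)"
    by (simp add: Fmodel_def)
  moreover have "\<mu> k j * n\<^sup>2 \<le> (y k j - x k) \<bullet> (Q k j *v (y k j - x k))"
    using Q_bnd j' by (simp add: n_def)
  moreover have "(rho0 + \<alpha>) * n\<^sup>2 \<le> \<mu> k j * n\<^sup>2"
    using mu by (intro mult_right_mono) auto
  ultimately have "g0 (y k j) + \<phi> (y k j) \<le> g0 (x k) + \<phi> (x k) - \<alpha> / 2 * n\<^sup>2"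
    by (simp add: algebra_simps)
  hence "Fobj g0 g \<phi> (y k j) \<le> Fobj g0 g \<phi> (x k) - ereal (\<alpha> / 2 * (norm (y k j - x k))\<^sup>2)"
    using feas iterate_feasible[of k] by (simp add: Fobj_def feasible_def n_def)
  thus False using reject j feas by blast
qed

definition "Mmu = max \<mu>max (\<tau> * (rho0 + \<alpha>))"

lemma mu_le_Mmu: "j \<le> jk k \<Longrightarrow> \<mu> k j \<le> Mmu"
proof (induction j)
  case 0
  show ?case using mu0 by (simp add: Mmu_def le_max_iff_disj)
next
  case (Suc j)
  hence j: "j < jk k" by simp
  show ?case
  proof (cases "g (y k j) \<in> nonpos_orthant")
    case True
    hence "\<mu> k (Suc j) = \<tau> * \<mu> k j" using update j by blast
    also have "\<dots> \<le> \<tau> * (rho0 + \<alpha>)"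
      using mu_small_if_rejected_feasible[OF j True] tau_gt_1 by (intro mult_left_mono) auto
    finally show ?thesis by (simp add: Mmu_def)
  next
    case False
    hence "\<mu> k (Suc j) = \<mu> k j" using update j by blast
    thus ?thesis using Suc j by simp
  qed
qed

lemma L_small_if_rejected_infeasible:
  assumes j: "j < jk k" and infeas: "g (y k j) \<notin> nonpos_orthant"
  shows "\<exists>i. L k j $ i < \<beta>C + rhog"
proof (rule ccontr)
  assume "\<not> (\<exists>i. L k j $ i < \<beta>C + rhog)"
  hence Li: "\<beta>C + rhog \<le> L k j $ i" for i by (simp add: not_less)
  have j': "j \<le> jk k" using j by simp
  define n where "n = norm (y k j - x k)"
  have "g (y k j) $ i \<le> 0" for i
  proof -
    have col: "column i (V k) \<in> limiting_subdiff (\<lambda>w. g w $ i) (x k)"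
      using V_sub by (simp add: subdiff_vec_def)
    have "g (y k j) $ i \<le> g (x k) $ i + column i (V k) \<bullet> (y k j - x k) + rhog / 2 * n\<^sup>2"
      using uniform_upper_C2_onD(2)[OF rhog(3) iterate_in_ball col in_ball_R1[OF trial_near[OF j']]]
      by (simp add: n_def)
    also have "\<dots> = Gfun g (y k j) (x k) (V k) (L k j) $ i + (rhog - L k j $ i) / 2 * n\<^sup>2"
      by (simp add: Gfun_component n_def algebra_simps diff_divide_distrib)
    also have "\<dots> \<le> (\<beta>C + rhog - L k j $ i) / 2 * n\<^sup>2"
      using trial_G_le(1)[OF j', of i] by (simp add: n_def algebra_simps diff_divide_distrib add_divide_distrib)
    also have "\<dots> \<le> 0" using Li[of i] by (intro mult_nonpos_nonneg) auto
    finally show ?thesis .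
  qed
  thus False using infeas by (simp add: nonpos_orthant_def)
qed

definition "cL = max 1 (\<tau> * ((\<beta>C + rhog) / Lmin))"

lemma L_scaled: "j \<le> jk k \<Longrightarrow> \<exists>c. 1 \<le> c \<and> c \<le> cL \<and> L k j = c *\<^sub>R L k 0"
proof (induction j)
  case 0
  show ?case by (intro exI[of _ 1]) (simp add: cL_def)
next
  case (Suc j)
  hence j: "j < jk k" by simp
  then obtain c where c: "1 \<le> c" "c \<le> cL" "L k j = c *\<^sub>R L k 0" using Suc by auto
  show ?case
  proof (cases "g (y k j) \<in> nonpos_orthant")
    case True
    thus ?thesis using update j c by auto
  next
    case False
    then obtain i where i: "L k j $ i < \<beta>C + rhog"
      using L_small_if_rejected_infeasible[OF j] by blast
    have "Lmin \<le> L k 0 $ i" using L0 by blast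
    hence "c * Lmin \<le> L k j $ i"
      using c(1,3) mult_left_mono[of Lmin "L k 0 $ i" c] by simp
    hence "c < (\<beta>C + rhog) / Lmin"
      using i L_min_pos by (simp add: field_simps)
    hence "\<tau> * c \<le> \<tau> * ((\<beta>C + rhog) / Lmin)"
      using tau_gt_1 by (intro mult_left_mono) auto
    hence "\<tau> * c \<le> cL" by (simp add: cL_def)
    moreover have "1 * 1 \<le> \<tau> * c" using c(1) tau_gt_1 by (intro mult_mono) auto
    moreover have "L k (Suc j) = (\<tau> * c) *\<^sub>R L k 0" using update j False c(3) by simp
    ultimately show ?thesis by (intro exI[of _ "\<tau> * c"]) simp
  qed
qed

lemma L_bounds: "j \<le> jk k \<Longrightarrow> 0 \<le> L k j $ i \<and> L k j $ i \<le> cL * Lmax"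
proof -
  assume j: "j \<le> jk k"
  obtain c where c: "1 \<le> c" "c \<le> cL" "L k j = c *\<^sub>R L k 0" using L_scaled[OF j] by blast
  have L0i: "Lmin \<le> L k 0 $ i" "L k 0 $ i \<le> Lmax" using L0 by auto
  have "0 \<le> c * L k 0 $ i" using c(1) L0i(1) L_min_pos by simp
  moreover have "c * L k 0 $ i \<le> cL * Lmax"
    using c(1,2) L0i L_min_pos by (intro mult_mono) auto
  ultimately show ?thesis using c(3) by simp
qed

definition "Qk k = Q k (jk k)"
definition "Lk k = L k (jk k)"
definition "xbk k = xbar k (jk k)"
definition "uk k = (x k, Lk k, V k, \<xi> k, Qk k)"

lemma Sset_uk: "Sset g (uk k) = {z. Gfun g z (x k) (V k) (Lk k) \<in> nonpos_orthant}"
  by (simp add: Sset_def Hfun_def uk_def)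

lemma Lambda_set_uk:
  "lb \<in> Lambda_set g (uk k) z w \<longleftrightarrow>
     lb \<in> normal_cone nonpos_orthant (Gfun g z (x k) (V k) (Lk k)) \<and>
     V k *v lb + (Lk k \<bullet> lb) *\<^sub>R (z - x k) = w"
  by (simp add: Lambda_set_def Hfun_def gradH_def uk_def)

lemma Qk_sym: "transpose (Qk k) = Qk k"
  using Q_bnd by (simp add: Qk_def)

lemma Lk_nonneg: "\<forall>i. 0 \<le> Lk k $ i"
  using L_bounds[of "jk k" k] by (simp add: Lk_def)

lemma uk_in_U: "in_U (uk k)"
  using Lk_nonneg Qk_sym Q_psd[of "jk k" k] by (simp add: in_U_def uk_def Qk_def)

lemma xbk_in_Sset: "xbk k \<in> Sset g (uk k)"
  using xbar_min by (simp add: Sset_uk xbk_def Lk_def)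

lemma xbk_min: "\<forall>z\<in>Sset g (uk k). Fmodel g0 \<phi> (x k) (\<xi> k) (Qk k) (xbk k) \<le> Fmodel g0 \<phi> (x k) (\<xi> k) (Qk k) z"
  using xbar_min by (simp add: Sset_uk xbk_def Lk_def Qk_def)

lemma KKT_exists:
  "\<exists>a. (\<forall>y. \<phi> (xbk k) + a \<bullet> (y - xbk k) \<le> \<phi> y) \<and>
       - (a + (\<xi> k + Qk k *v (xbk k - x k))) \<in> normal_cone (Sset g (uk k)) (xbk k)"
proof -
  have "convex (Sset g (uk k))"
    unfolding Sset_uk by (rule convex_Gfun_feasible[OF Lk_nonneg])
  thus ?thesis by (rule Fmodel_min_KKT[OF _ xbk_in_Sset phi_convex Qk_sym xbk_min])
qed

definition "vbar k = (SOME a. (\<forall>y. \<phi> (xbk k) + a \<bullet> (y - xbk k) \<le> \<phi> y) \<and>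
   - (a + (\<xi> k + Qk k *v (xbk k - x k))) \<in> normal_cone (Sset g (uk k)) (xbk k))"
definition "nbar k = - (vbar k + (\<xi> k + Qk k *v (xbk k - x k)))"

lemma vbar_subgradient: "\<phi> (xbk k) + vbar k \<bullet> (w - xbk k) \<le> \<phi> w"
  and nbar_normal: "nbar k \<in> normal_cone (Sset g (uk k)) (xbk k)"
  using someI_ex[OF KKT_exists[of k]] unfolding vbar_def[symmetric] nbar_def by auto

lemma xbk_near: "norm (xbk k - x k) \<le> Dmax"
  using xbar_near by (simp add: xbk_def)

lemma xbk_in_ball: "xbk k \<in> cball 0 R1"
  using in_ball_R1[OF xbk_near] .

lemma vbar_norm_le: "norm (vbar k) \<le> 2 * phi_bound (R1 + 1)"
proof (rule subgradient_norm_le[OF vbar_subgradient])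
  fix w assume "w \<in> cball (xbk k) 1"
  hence "norm w \<le> R1 + 1"
    using xbk_in_ball[of k] norm_triangle_sub[of w "xbk k"] by (simp add: dist_norm norm_minus_commute)
  thus "\<bar>\<phi> w\<bar> \<le> phi_bound (R1 + 1)" by (rule phi_bound)
qed

lemma Qk_mult_norm_le: "norm (Qk k *v d) \<le> (Mmu + M) * norm d"
proof -
  have "norm (Qk k *v d) \<le> (\<mu> k (jk k) + M) * norm d"
    using Q_bnd Q_psd[of "jk k" k] mu_ge_min[of "jk k" k] mu_min_pos M_pos
    by (intro psd_matrix_vector_norm_le) (auto simp: Qk_def)
  also have "\<dots> \<le> (Mmu + M) * norm d"
    using mu_le_Mmu[of "jk k" k] by (intro mult_right_mono) auto
  finally show ?thesis .
qed

definition "Abnd = 2 * phi_bound (R1 + 1) + Kxi + (Mmu + M) * Dmax"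

lemma nbar_norm_le: "norm (nbar k) \<le> Abnd"
proof -
  have "norm (nbar k) \<le> norm (vbar k) + (norm (\<xi> k) + norm (Qk k *v (xbk k - x k)))"
    unfolding nbar_def norm_minus_cancel by (meson norm_triangle_ineq order_trans add_left_mono)
  moreover have "norm (Qk k *v (xbk k - x k)) \<le> (Mmu + M) * Dmax"
  proof -
    have "0 \<le> Mmu + M"
      using mu_min_pos mu_min_le_max M_pos by (simp add: Mmu_def le_max_iff_disj)
    thus ?thesis
      using Qk_mult_norm_le[of k "xbk k - x k"] xbk_near[of k] by (meson mult_left_mono order_trans)
  qed
  ultimately show ?thesis
    using vbar_norm_le[of k] Kxi(2)[of k] by (simp add: Abnd_def)
qed

lemma Abnd_nonneg: "0 \<le> Abnd"
  using nbar_norm_le[of 0] norm_ge_zero order_trans by blast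

text \<open>The core estimate: comparing the model at the exact solution \<open>xbk k\<close> and at the accepted
  inexact solution \<open>x (Suc k)\<close> through both (approximate) KKT systems.\<close>

lemma xbk_gap_estimate:
  assumes lb: "lb \<in> Lambda_set g (uk k) (xbk k) (nbar k)"
  shows "\<mu>min * (norm (xbk k - x (Suc k)))\<^sup>2
         \<le> \<beta>S * step k * norm (xbk k - x (Suc k)) + \<beta>C / 2 * (1 + (\<Sum>i\<in>UNIV. lb $ i)) * (step k)\<^sup>2"
proof -
  define j where "j = jk k"
  define Y Z G Fm where "Y = x (Suc k)" and "Z = xbk k" and "G = (\<lambda>z. Gfun g z (x k) (V k) (Lk k))"
    and "Fm = Fmodel g0 \<phi> (x k) (\<xi> k) (Qk k)"
  define d e where "d = step k" and "e = norm (Z - Y)"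
  have Y: "Y = y k j" and d: "d = norm (Y - x k)" by (simp_all add: Y_def j_def x_next d_def step_def)
  have Qlo: "\<And>h. \<mu>min * (norm h)\<^sup>2 \<le> h \<bullet> (Qk k *v h)" using Q_lower[of "jk k" k] by (simp add: Qk_def)
  have inex: "v k j \<in> limiting_subdiff \<phi> Y" "\<forall>i. 0 \<le> lam k j $ i"
    "norm (\<xi> k + Qk k *v (Y - x k) + v k j + V k *v lam k j + (Lk k \<bullet> lam k j) *\<^sub>R (Y - x k)) \<le> \<beta>S * d"
    using inexact by (simp_all add: Y d j_def Qk_def Lk_def)
  have GY: "G Y $ i \<le> \<beta>C / 2 * d\<^sup>2" "- (lam k j \<bullet> G Y) \<le> \<beta>C / 2 * d\<^sup>2" for i
    using trial_G_le[of j k] by (simp_all add: G_def Y d j_def Lk_def)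
  have lbZ: "lb \<in> normal_cone nonpos_orthant (G Z)" "V k *v lb + (Lk k \<bullet> lb) *\<^sub>R (Z - x k) = nbar k"
    using lb by (simp_all add: Lambda_set_uk G_def Z_def)
  hence compl: "\<forall>i. 0 \<le> lb $ i \<and> lb $ i * G Z $ i = 0"
    by (simp add: normal_cone_nonpos_orthant_iff)
  hence lb_nonneg: "\<forall>i. 0 \<le> lb $ i" and lbGZ: "lb \<bullet> G Z = 0"
    by (simp_all add: inner_vec_def sum.neutral)
  have GZ: "G Z \<in> nonpos_orthant" using xbk_in_Sset[of k] by (simp add: Sset_uk G_def Z_def)
  \<comment> \<open>growth of the model from the inexact solution \<open>Y\<close>, whose KKT residual is at most \<open>\<beta>S d\<close>\<close>
  have "- (\<beta>S * d * e) - \<beta>C / 2 * d\<^sup>2 + \<mu>min / 2 * e\<^sup>2 \<le> Fm Z - Fm Y"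
  proof -
    define r where "r = \<xi> k + Qk k *v (Y - x k) + v k j + V k *v lam k j + (Lk k \<bullet> lam k j) *\<^sub>R (Y - x k)"
    have "- (r \<bullet> (Z - Y)) \<le> \<beta>S * d * e"
      using Cauchy_Schwarz_ineq2[of r "Z - Y"] abs_ge_minus_self[of "r \<bullet> (Z - Y)"]
        mult_right_mono[OF inex(3)[folded r_def] norm_ge_zero[of "Z - Y"]]
      unfolding e_def by linarith
    moreover have "lam k j \<bullet> G Z \<le> 0"
      using inner_le_sum_mult[OF inex(2), of "G Z" 0] GZ by (simp add: nonpos_orthant_def)
    moreover have "r \<bullet> (Z - Y) + lam k j \<bullet> G Y - lam k j \<bullet> G Z + \<mu>min / 2 * e\<^sup>2 \<le> Fm Z - Fm Y"
      unfolding r_def G_def Fm_def e_def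
      by (rule Fmodel_growth[OF Qk_sym Qlo inex(2) Lk_nonneg])
        (use inex(1) limiting_subdiff_convex_iff[OF phi_convex] in blast)
    ultimately show ?thesis using GY(2) by linarith
  qed
  \<comment> \<open>growth of the model from the exact solution \<open>Z\<close>, whose KKT residual vanishes\<close>
  moreover have "- ((\<Sum>i\<in>UNIV. lb $ i) * (\<beta>C / 2 * d\<^sup>2)) + \<mu>min / 2 * e\<^sup>2 \<le> Fm Y - Fm Z"
  proof -
    have "\<xi> k + Qk k *v (Z - x k) + vbar k + V k *v lb + (Lk k \<bullet> lb) *\<^sub>R (Z - x k) = 0"
      using lbZ(2) by (simp add: nbar_def Z_def algebra_simps)
    moreover have "lb \<bullet> G Y \<le> (\<Sum>i\<in>UNIV. lb $ i) * (\<beta>C / 2 * d\<^sup>2)"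
      using inner_le_sum_mult[OF lb_nonneg] GY(1) by blast
    moreover have "(\<xi> k + Qk k *v (Z - x k) + vbar k + V k *v lb + (Lk k \<bullet> lb) *\<^sub>R (Z - x k)) \<bullet> (Y - Z)
        + lb \<bullet> G Z - lb \<bullet> G Y + \<mu>min / 2 * (norm (Y - Z))\<^sup>2 \<le> Fm Y - Fm Z"
      unfolding G_def Fm_def
      by (rule Fmodel_growth[OF Qk_sym Qlo lb_nonneg Lk_nonneg]) (simp add: vbar_subgradient Z_def)
    ultimately show ?thesis using lbGZ by (simp add: e_def norm_minus_commute)
  qed
  ultimately have "\<mu>min * e\<^sup>2 \<le> \<beta>S * d * e + \<beta>C / 2 * (1 + (\<Sum>i\<in>UNIV. lb $ i)) * d\<^sup>2"
    by (simp add: algebra_simps)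
  thus ?thesis by (simp add: e_def d_def Z_def Y_def)
qed

lemma xbk_gap_le:
  assumes lb: "lb \<in> Lambda_set g (uk k) (xbk k) (nbar k)" and C: "norm lb \<le> C"
  shows "(norm (xbk k - x (Suc k)))\<^sup>2
         \<le> max ((2 * \<beta>S / \<mu>min)\<^sup>2) (2 * (\<beta>C / 2 * (1 + real CARD('m) * C)) / \<mu>min) * (step k)\<^sup>2"
proof (rule quadratic_inequality_bound[OF mu_min_pos _ _ norm_ge_zero])
  have "(\<Sum>i\<in>UNIV. lb $ i) \<le> (\<Sum>i\<in>(UNIV::'m set). C)"
    using component_le_norm_cart[of lb] C by (intro sum_mono) (meson abs_ge_self order_trans)
  hence "\<beta>C / 2 * (1 + (\<Sum>i\<in>UNIV. lb $ i)) * (step k)\<^sup>2 \<le> \<beta>C / 2 * (1 + real CARD('m) * C) * (step k)\<^sup>2"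
    using beta_C_pos by (intro mult_right_mono mult_left_mono) auto
  thus "\<mu>min * (norm (xbk k - x (Suc k)))\<^sup>2
      \<le> \<beta>S * step k * norm (xbk k - x (Suc k)) + \<beta>C / 2 * (1 + real CARD('m) * C) * (step k)\<^sup>2"
    using xbk_gap_estimate[OF lb] by linarith
qed (use beta_S_pos in \<open>simp_all add: step_def\<close>)

lemma V_entry_le: "\<bar>V k $ a $ b\<bar> \<le> Kg"
proof -
  have "column b (V k) \<in> limiting_subdiff (\<lambda>w. g w $ b) (x k)"
    using V_sub by (simp add: subdiff_vec_def)
  hence "norm (column b (V k)) \<le> Kg"
    by (rule uniform_upper_C2_onD(1)[OF rhog(3) iterate_in_ball])
  moreover have "\<bar>V k $ a $ b\<bar> \<le> norm (column b (V k))"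
    using component_le_norm_cart[of "column b (V k)" a] by (simp add: column_def)
  ultimately show ?thesis by simp
qed

lemma Qk_entry_le: "\<bar>Qk k $ a $ b\<bar> \<le> Mmu + M"
proof -
  have "\<bar>Qk k $ a $ b\<bar> = \<bar>(Qk k *v axis b 1) $ a\<bar>"
    by (simp add: matrix_vector_mult_basis column_def)
  also have "\<dots> \<le> norm (Qk k *v axis b 1)" by (rule component_le_norm_cart)
  also have "\<dots> \<le> (Mmu + M) * norm (axis b (1::real))" by (rule Qk_mult_norm_le)
  finally show ?thesis by (simp add: norm_axis_1)
qed

lemma data_bounded: "bounded (range (\<lambda>k. (uk k, xbk k)))"
proof -
  define B where "B = Rx + real CARD('m) * (cL * Lmax) + real CARD('n) * (real CARD('m) * Kg) + Kxi
                    + real CARD('n) * (real CARD('n) * (Mmu + M)) + R1"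
  have "norm (uk k, xbk k) \<le> B" for k
  proof -
    have "norm (Lk k) \<le> (\<Sum>i\<in>UNIV. \<bar>Lk k $ i\<bar>)" by (rule norm_le_l1_cart)
    also have "\<dots> \<le> (\<Sum>i\<in>(UNIV::'m set). cL * Lmax)"
      using L_bounds[of "jk k" k] by (intro sum_mono) (auto simp: Lk_def)
    finally have "norm (Lk k) \<le> real CARD('m) * (cL * Lmax)" by simp
    moreover have "norm (V k) \<le> real CARD('n) * (real CARD('m) * Kg)"
      by (rule norm_matrix_le_entries) (rule V_entry_le)
    moreover have "norm (Qk k) \<le> real CARD('n) * (real CARD('n) * (Mmu + M))"
      by (rule norm_matrix_le_entries) (rule Qk_entry_le)
    moreover have "norm (uk k, xbk k) \<le> norm (x k) + (norm (Lk k) + (norm (V k) + (norm (\<xi> k) + norm (Qk k)))) + norm (xbk k)"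
      unfolding uk_def
      using norm_Pair_le[of "(x k, Lk k, V k, \<xi> k, Qk k)" "xbk k"] norm_Pair_le[of "x k" "(Lk k, V k, \<xi> k, Qk k)"]
        norm_Pair_le[of "Lk k" "(V k, \<xi> k, Qk k)"] norm_Pair_le[of "V k" "(\<xi> k, Qk k)"] norm_Pair_le[of "\<xi> k" "Qk k"]
      by linarith
    ultimately show ?thesis
      using Rx(2)[of k] Kxi(2)[of k] xbk_in_ball[of k] by (simp add: B_def)
  qed
  thus ?thesis unfolding bounded_iff by blast
qed

text \<open>Along a subsequence on which the data of the accepted subproblems converge, the partial
  bounded multiplier property (Assumption 4) provides uniformly bounded multipliers for the
  exact KKT systems.\<close>

lemma bounded_multipliers_along:
  assumes s: "strict_mono s" and lim: "(\<lambda>k. (uk (s k), xbk (s k))) \<longlonglongrightarrow> l"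
  shows "\<exists>C lb. (\<forall>k. norm (lb k) \<le> C) \<and>
           eventually (\<lambda>k. lb k \<in> Lambda_set g (uk (s k)) (xbk (s k)) (nbar (s k))) sequentially"
proof -
  have "(\<lambda>k. ((x k, L k (jk k), V k, \<xi> k, Q k (jk k)), xbar k (jk k))) = (\<lambda>k. (uk k, xbk k))"
    by (simp add: uk_def xbk_def Lk_def Qk_def)
  moreover have "cluster_point (\<lambda>k. (uk k, xbk k)) l"
    unfolding cluster_point_def using s lim by (auto simp: comp_def)
  ultimately have "partial_BMP g (fst l) (snd l)"
    by (intro BMP_cluster_points[rule_format]) simp
  then obtain \<kappa> UU VV where \<kappa>: "\<kappa> > 0" and UU: "open UU" "fst l \<in> UU" and VV: "open VV" "snd l \<in> VV"
    and bmp: "\<forall>u\<in>UU. in_U u \<longrightarrow> (\<forall>z\<in>VV \<inter> Sset g u. \<forall>w\<in>normal_cone (Sset g u) z.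
                 \<exists>lb\<in>Lambda_set g u z w. norm lb \<le> \<kappa> * norm w)"
    unfolding partial_BMP_def by blast
  have "eventually (\<lambda>k. uk (s k) \<in> UU) sequentially"
    using topological_tendstoD[OF tendsto_fst[OF lim] UU] by simp
  moreover have "eventually (\<lambda>k. xbk (s k) \<in> VV) sequentially"
    using topological_tendstoD[OF tendsto_snd[OF lim] VV] by simp
  ultimately have ev: "eventually (\<lambda>k. uk (s k) \<in> UU \<and> xbk (s k) \<in> VV) sequentially"
    by (rule eventually_conj)
  define P where "P k b \<longleftrightarrow> b \<in> Lambda_set g (uk (s k)) (xbk (s k)) (nbar (s k)) \<and> norm b \<le> \<kappa> * Abnd"
    for k b
  define lb where "lb k = (if \<exists>b. P k b then SOME b. P k b else 0)" for k
  have "norm (lb k) \<le> \<kappa> * Abnd" for k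
  proof (cases "\<exists>b. P k b")
    case True
    hence "P k (lb k)" using someI_ex[OF True] by (simp add: lb_def)
    thus ?thesis by (simp add: P_def)
  next
    case False
    thus ?thesis using \<kappa> Abnd_nonneg by (simp add: lb_def)
  qed
  moreover have "eventually (\<lambda>k. lb k \<in> Lambda_set g (uk (s k)) (xbk (s k)) (nbar (s k))) sequentially"
    using ev
  proof eventually_elim
    case (elim k)
    hence "xbk (s k) \<in> VV \<inter> Sset g (uk (s k))" using xbk_in_Sset by simp
    with bmp elim obtain b where b: "b \<in> Lambda_set g (uk (s k)) (xbk (s k)) (nbar (s k))"
      and "norm b \<le> \<kappa> * norm (nbar (s k))"
      using uk_in_U nbar_normal by blast
    moreover have "\<kappa> * norm (nbar (s k)) \<le> \<kappa> * Abnd"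
      using nbar_norm_le \<kappa> by (intro mult_left_mono) auto
    ultimately have "P k b" by (simp add: P_def)
    hence "\<exists>b. P k b" by blast
    hence "P k (lb k)" using someI_ex[of "P k"] by (simp add: lb_def)
    thus ?case by (simp add: P_def)
  qed
  ultimately show ?thesis by blast
qed

lemma xbk_gap_tendsto_zero:
  assumes s: "strict_mono s" and C: "\<forall>k. norm (lb k) \<le> C"
    and ev: "eventually (\<lambda>k. lb k \<in> Lambda_set g (uk (s k)) (xbk (s k)) (nbar (s k))) sequentially"
  shows "(\<lambda>k. xbk (s k) - x (s k)) \<longlonglongrightarrow> 0"
proof -
  define E where "E = max ((2 * \<beta>S / \<mu>min)\<^sup>2) (2 * (\<beta>C / 2 * (1 + real CARD('m) * C)) / \<mu>min)"
  have E: "0 \<le> E" by (simp add: E_def le_max_iff_disj)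
  have step_s: "(\<lambda>k. step (s k)) \<longlonglongrightarrow> 0"
    using LIMSEQ_subseq_LIMSEQ[OF step_tendsto_zero s] by (simp add: comp_def)
  have "eventually (\<lambda>k. norm (xbk (s k) - x (Suc (s k))) \<le> sqrt E * step (s k)) sequentially"
    using ev
  proof eventually_elim
    case (elim k)
    have "(norm (xbk (s k) - x (Suc (s k))))\<^sup>2 \<le> E * (step (s k))\<^sup>2"
      unfolding E_def by (rule xbk_gap_le[OF elim C[rule_format]])
    also have "\<dots> = (sqrt E * step (s k))\<^sup>2"
      using E by (simp add: power_mult_distrib)
    finally show ?case
      by (rule power2_le_imp_le) (simp add: step_def E)
  qed
  moreover have "(\<lambda>k. sqrt E * step (s k)) \<longlonglongrightarrow> 0"
    by (rule tendsto_mult_right_zero[OF step_s])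
  ultimately have a: "(\<lambda>k. xbk (s k) - x (Suc (s k))) \<longlonglongrightarrow> 0"
    by (rule Lim_null_comparison)
  have "(\<lambda>k. norm (x (Suc (s k)) - x (s k))) \<longlonglongrightarrow> 0"
    using step_s by (simp add: step_def)
  hence b: "(\<lambda>k. x (Suc (s k)) - x (s k)) \<longlonglongrightarrow> 0"
    by (simp only: tendsto_norm_zero_iff)
  show ?thesis using tendsto_add[OF a b] by simp
qed

lemma stationary_of_KKT_limits:
  assumes xt: "(\<lambda>k. x (t k)) \<longlonglongrightarrow> p" and \<xi>t: "(\<lambda>k. \<xi> (t k)) \<longlonglongrightarrow> \<xi>s"
    and Vt: "(\<lambda>k. V (t k)) \<longlonglongrightarrow> Vs" and Lt: "(\<lambda>k. Lk (t k)) \<longlonglongrightarrow> Ls" and Qt: "(\<lambda>k. Qk (t k)) \<longlonglongrightarrow> Qs"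
    and gap: "(\<lambda>k. xbk (t k) - x (t k)) \<longlonglongrightarrow> 0" and vt: "(\<lambda>k. vbar (t k)) \<longlonglongrightarrow> vs"
    and lbt: "lbs \<longlonglongrightarrow> ls"
    and ev: "eventually (\<lambda>k. lbs k \<in> Lambda_set g (uk (t k)) (xbk (t k)) (nbar (t k))) sequentially"
  shows "stationary g0 g \<phi> p"
proof -
  have p: "p \<in> feasible g"
    using closed_sequentially[OF closed_feasible _ xt] iterate_feasible by simp
  have xbt: "(\<lambda>k. xbk (t k)) \<longlonglongrightarrow> p"
    using tendsto_add[OF gap xt] by simp
  have "eventually (\<lambda>k. \<xi> (t k) + Qk (t k) *v (xbk (t k) - x (t k)) + vbar (t k) + V (t k) *v lbs k
      + (Lk (t k) \<bullet> lbs k) *\<^sub>R (xbk (t k) - x (t k)) = 0) sequentially"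
    using ev by eventually_elim (simp add: Lambda_set_uk nbar_def algebra_simps)
  hence lim0: "(\<lambda>k. \<xi> (t k) + Qk (t k) *v (xbk (t k) - x (t k)) + vbar (t k) + V (t k) *v lbs k
      + (Lk (t k) \<bullet> lbs k) *\<^sub>R (xbk (t k) - x (t k))) \<longlonglongrightarrow> 0"
    by (rule tendsto_eventually)
  have "(\<lambda>k. \<xi> (t k) + Qk (t k) *v (xbk (t k) - x (t k)) + vbar (t k) + V (t k) *v lbs k
      + (Lk (t k) \<bullet> lbs k) *\<^sub>R (xbk (t k) - x (t k))) \<longlonglongrightarrow> \<xi>s + Qs *v 0 + vs + Vs *v ls + (Ls \<bullet> ls) *\<^sub>R 0"
    by (intro tendsto_add tendsto_matrix_vector_mult tendsto_scaleR tendsto_inner \<xi>t Qt gap vt Vt lbt Lt)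
  from LIMSEQ_unique[OF this lim0]
  have KKT: "\<xi>s + vs + (\<Sum>i\<in>UNIV. ls $ i *\<^sub>R column i Vs) = 0"
    by (simp add: matrix_vector_mult_column_sum)
  have \<xi>s: "\<xi>s \<in> limiting_subdiff g0 p"
    using xi_sub by (intro limiting_subdiff_closed[OF xt isCont_tendsto_compose[OF g0_isCont[OF p] xt] _ \<xi>t]) auto
  have col: "column i Vs \<in> limiting_subdiff (\<lambda>w. g w $ i) p" for i
  proof (rule limiting_subdiff_closed[OF xt _ _ tendsto_column[OF Vt]])
    show "(\<lambda>k. g (x (t k)) $ i) \<longlonglongrightarrow> g p $ i"
      by (intro tendsto_vec_nth isCont_tendsto_compose[OF g_isCont xt])
    show "column i (V (t k)) \<in> limiting_subdiff (\<lambda>w. g w $ i) (x (t k))" for k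
      using V_sub by (simp add: subdiff_vec_def)
  qed
  have vs: "vs \<in> limiting_subdiff \<phi> p"
    unfolding limiting_subdiff_convex_iff[OF phi_convex]
  proof
    fix w
    have "(\<lambda>k. \<phi> (xbk (t k)) + vbar (t k) \<bullet> (w - xbk (t k))) \<longlonglongrightarrow> \<phi> p + vs \<bullet> (w - p)"
      by (intro tendsto_intros isCont_tendsto_compose[OF phi_isCont xbt] vt xbt)
    thus "\<phi> p + vs \<bullet> (w - p) \<le> \<phi> w"
      by (rule tendsto_upperbound) (simp_all add: vbar_subgradient)
  qed
  have ls: "ls \<in> normal_cone nonpos_orthant (g p)"
  proof (rule normal_cone_nonpos_orthant_limit[OF _ lbt])
    show "(\<lambda>k. Gfun g (xbk (t k)) (x (t k)) (V (t k)) (Lk (t k))) \<longlonglongrightarrow> g p"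
      by (rule tendsto_Gfun[OF g_isCont xbt xt Vt Lt])
    show "eventually (\<lambda>k. lbs k \<in> normal_cone nonpos_orthant (Gfun g (xbk (t k)) (x (t k)) (V (t k)) (Lk (t k)))) sequentially"
      using ev by eventually_elim (simp add: Lambda_set_uk)
  qed
  show ?thesis
    unfolding stationary_def
    by (intro conjI p bexI[where x = \<xi>s] bexI[where x = vs] bexI[where x = ls]
        exI[where x = "\<lambda>i. column i Vs"] \<xi>s vs ls) (simp_all add: col KKT)
qed

lemma cluster_point_stationary:
  assumes "cluster_point x p"
  shows "stationary g0 g \<phi> p"
proof -
  obtain r where r: "strict_mono r" and xr: "(x \<circ> r) \<longlonglongrightarrow> p"
    using assms unfolding cluster_point_def by blast
  have "bounded (range (\<lambda>k. (uk (r k), xbk (r k))))"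
    using data_bounded by (rule bounded_subset) auto
  then obtain l r2 where r2: "strict_mono r2" and lim: "((\<lambda>k. (uk (r k), xbk (r k))) \<circ> r2) \<longlonglongrightarrow> l"
    using bounded_imp_convergent_subsequence by blast
  define s where "s = r \<circ> r2"
  have s: "strict_mono s" using r r2 by (simp add: s_def strict_mono_o)
  have lim_s: "(\<lambda>k. (uk (s k), xbk (s k))) \<longlonglongrightarrow> l" using lim by (simp add: s_def comp_def)
  obtain C lb where C: "\<forall>k. norm (lb k) \<le> C"
    and ev: "eventually (\<lambda>k. lb k \<in> Lambda_set g (uk (s k)) (xbk (s k)) (nbar (s k))) sequentially"
    using bounded_multipliers_along[OF s lim_s] by blast
  have "norm (lb k, vbar (s k)) \<le> C + 2 * phi_bound (R1 + 1)" for k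
    using norm_Pair_le[of "lb k" "vbar (s k)"] C[rule_format, of k] vbar_norm_le[of "s k"] by linarith
  hence "bounded (range (\<lambda>k. (lb k, vbar (s k))))"
    unfolding bounded_iff by blast
  then obtain lv r3 where r3: "strict_mono r3" and lim_lv: "((\<lambda>k. (lb k, vbar (s k))) \<circ> r3) \<longlonglongrightarrow> lv"
    using bounded_imp_convergent_subsequence by blast
  define t where "t = s \<circ> r3"
  obtain p0 Ls Vs \<xi>s Qs xs where l: "l = ((p0, Ls, Vs, \<xi>s, Qs), xs)" by (metis prod.exhaust)
  have ut: "(\<lambda>k. uk (t k)) \<longlonglongrightarrow> (p0, Ls, Vs, \<xi>s, Qs)"
    using tendsto_fst[OF LIMSEQ_subseq_LIMSEQ[OF lim_s r3]] by (simp add: l t_def comp_def)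
  show ?thesis
  proof (rule stationary_of_KKT_limits)
    show "(\<lambda>k. x (t k)) \<longlonglongrightarrow> p"
      using LIMSEQ_subseq_LIMSEQ[OF xr strict_mono_o[OF r2 r3]] by (simp add: t_def s_def comp_def)
    show "(\<lambda>k. \<xi> (t k)) \<longlonglongrightarrow> \<xi>s" "(\<lambda>k. V (t k)) \<longlonglongrightarrow> Vs" "(\<lambda>k. Lk (t k)) \<longlonglongrightarrow> Ls"
      "(\<lambda>k. Qk (t k)) \<longlonglongrightarrow> Qs"
      using tendsto_fst[OF tendsto_snd[OF ut]] tendsto_fst[OF tendsto_snd[OF tendsto_snd[OF ut]]]
        tendsto_fst[OF tendsto_snd[OF tendsto_snd[OF tendsto_snd[OF ut]]]]
        tendsto_snd[OF tendsto_snd[OF tendsto_snd[OF tendsto_snd[OF ut]]]]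
      by (simp_all add: uk_def)
    show "(\<lambda>k. xbk (t k) - x (t k)) \<longlonglongrightarrow> 0"
      using LIMSEQ_subseq_LIMSEQ[OF xbk_gap_tendsto_zero[OF s C ev] r3] by (simp add: t_def comp_def)
    show "(\<lambda>k. vbar (t k)) \<longlonglongrightarrow> snd lv" "(lb \<circ> r3) \<longlonglongrightarrow> fst lv"
      using tendsto_snd[OF lim_lv] tendsto_fst[OF lim_lv] by (simp_all add: t_def comp_def)
    show "eventually (\<lambda>k. (lb \<circ> r3) k \<in> Lambda_set g (uk (t k)) (xbk (t k)) (nbar (t k))) sequentially"
      using eventually_subseq[OF r3 ev] by (simp add: t_def)
  qed
qed

theorem convergence:
  "\<exists>w. (\<lambda>k. Fobj g0 g \<phi> (x k)) \<longlonglongrightarrow> w \<and>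
       (\<forall>p. cluster_point x p \<longrightarrow> stationary g0 g \<phi> p \<and> Fobj g0 g \<phi> p = w)"
proof -
  have c: "fval \<longlonglongrightarrow> lim fval"
    using fval_convergent by (simp add: convergent_LIMSEQ_iff)
  have "Fobj g0 g \<phi> p = ereal (lim fval)" if cp: "cluster_point x p" for p
  proof -
    obtain r where r: "strict_mono r" and xr: "(\<lambda>k. x (r k)) \<longlonglongrightarrow> p"
      using cp unfolding cluster_point_def comp_def by blast
    have p: "p \<in> feasible g"
      using closed_sequentially[OF closed_feasible _ xr] iterate_feasible by simp
    have "(\<lambda>k. fval (r k)) \<longlonglongrightarrow> g0 p + \<phi> p"
      unfolding fval_def
      by (intro tendsto_add isCont_tendsto_compose[OF g0_isCont[OF p] xr] isCont_tendsto_compose[OF phi_isCont xr])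
    moreover have "(\<lambda>k. fval (r k)) \<longlonglongrightarrow> lim fval"
      using LIMSEQ_subseq_LIMSEQ[OF c r] by (simp add: comp_def)
    ultimately have "lim fval = g0 p + \<phi> p" using LIMSEQ_unique by blast
    thus ?thesis using p by (simp add: Fobj_def feasible_def)
  qed
  moreover have "(\<lambda>k. Fobj g0 g \<phi> (x k)) \<longlonglongrightarrow> ereal (lim fval)"
    using tendsto_ereal[OF c] by (simp add: Fobj_iterate)
  ultimately show ?thesis
    using cluster_point_stationary by (intro exI[of _ "ereal (lim fval)"]) simp
qed

end

theorem theorem4p1:
  fixes g0 :: "real^'n::finite \<Rightarrow> real"
    and g :: "real^'n \<Rightarrow> real^'m::finite"
    and \<phi> :: "real^'n \<Rightarrow> real"
    and Oset :: "(real^'n) set"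
    and \<mu>min \<mu>max Lmin Lmax M \<beta>C \<beta>S \<alpha> \<tau> :: real
    and x \<xi> :: "nat \<Rightarrow> real^'n"
    and V :: "nat \<Rightarrow> real^'m^'n"
    and jk :: "nat \<Rightarrow> nat"
    and \<mu> :: "nat \<Rightarrow> nat \<Rightarrow> real"
    and Q :: "nat \<Rightarrow> nat \<Rightarrow> real^'n^'n"
    and L :: "nat \<Rightarrow> nat \<Rightarrow> real^'m"
    and y v xbar :: "nat \<Rightarrow> nat \<Rightarrow> real^'n"
    and lam :: "nat \<Rightarrow> nat \<Rightarrow> real^'m"
  \<comment> \<open>Assumption 1\<close>
  assumes O_open: "open Oset" and O_convex: "convex Oset"
    and Gamma_sub: "feasible g \<subseteq> Oset" and Gamma_ne: "feasible g \<noteq> {}"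
    and g0_reg: "\<forall>z\<in>Oset. loc_lipschitz_at g0 z \<and> upper_C2_at g0 z"
    and g_reg: "\<forall>i z. loc_lipschitz_at (\<lambda>w. g w $ i) z \<and> upper_C2_at (\<lambda>w. g w $ i) z"
    and phi_convex: "convex_on UNIV \<phi>"
    and F_bdd: "\<exists>c. \<forall>z\<in>feasible g. c \<le> g0 z + \<phi> z"
  \<comment> \<open>parameters of iMBA\<close>
    and params: "0 < \<mu>min" "\<mu>min \<le> \<mu>max" "0 < Lmin" "Lmin \<le> Lmax"
                "0 < M" "0 < \<beta>C" "0 < \<beta>S" "0 < \<alpha>" "1 < \<tau>"
    and x0: "x 0 \<in> feasible g"
  \<comment> \<open>iteration k: choices\<close>
    and xi_sub: "\<forall>k. \<xi> k \<in> limiting_subdiff g0 (x k)"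
    and V_sub: "\<forall>k. V k \<in> subdiff_vec g (x k)"
    and mu0: "\<forall>k. \<mu>min \<le> \<mu> k 0 \<and> \<mu> k 0 \<le> \<mu>max"
    and L0: "\<forall>k i. Lmin \<le> L k 0 $ i \<and> L k 0 $ i \<le> Lmax"
    and Q_bnd: "\<forall>k j. j \<le> jk k \<longrightarrow> transpose (Q k j) = Q k j \<and>
                  (\<forall>d. \<mu> k j * (norm d)\<^sup>2 \<le> d \<bullet> (Q k j *v d) \<and>
                       d \<bullet> (Q k j *v d) \<le> (\<mu> k j + M) * (norm d)\<^sup>2)"
  \<comment> \<open>exact subproblem solution \<open>xbar k j\<close>\<close>
    and xbar_min: "\<forall>k j. j \<le> jk k \<longrightarrow>
                  Gfun g (xbar k j) (x k) (V k) (L k j) \<in> nonpos_orthant \<and>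
                  (\<forall>z. Gfun g z (x k) (V k) (L k j) \<in> nonpos_orthant \<longrightarrow>
                       Fmodel g0 \<phi> (x k) (\<xi> k) (Q k j) (xbar k j) \<le> Fmodel g0 \<phi> (x k) (\<xi> k) (Q k j) z)"
  \<comment> \<open>inexactness criteria for \<open>y k j, v k j, lam k j\<close>\<close>
    and inexact: "\<forall>k j. j \<le> jk k \<longrightarrow>
                  Fmodel g0 \<phi> (x k) (\<xi> k) (Q k j) (y k j) \<le> Fmodel g0 \<phi> (x k) (\<xi> k) (Q k j) (x k) \<and>
                  v k j \<in> limiting_subdiff \<phi> (y k j) \<and>
                  (\<forall>i. 0 \<le> lam k j $ i) \<and>
                  max 0 (- (lam k j \<bullet> Gfun g (y k j) (x k) (V k) (L k j))) +
                    infnorm (\<chi> i. max 0 (Gfun g (y k j) (x k) (V k) (L k j) $ i))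
                    \<le> \<beta>C / 2 * (norm (y k j - x k))\<^sup>2 \<and>
                  norm (\<xi> k + Q k j *v (y k j - x k) + v k j + V k *v lam k j
                        + (L k j \<bullet> lam k j) *\<^sub>R (y k j - x k))
                    \<le> \<beta>S * norm (y k j - x k)"
  \<comment> \<open>acceptance test: fails before \<open>jk k\<close>, holds at \<open>jk k\<close>\<close>
    and reject: "\<forall>k j. j < jk k \<longrightarrow> \<not> (g (y k j) \<in> nonpos_orthant \<and>
                  Fobj g0 g \<phi> (y k j) \<le> Fobj g0 g \<phi> (x k) - ereal (\<alpha> / 2 * (norm (y k j - x k))\<^sup>2))"
    and accept: "\<forall>k. g (y k (jk k)) \<in> nonpos_orthant \<and>
                  Fobj g0 g \<phi> (y k (jk k)) \<le> Fobj g0 g \<phi> (x k) - ereal (\<alpha> / 2 * (norm (y k (jk k) - x k))\<^sup>2)"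
    and update: "\<forall>k j. j < jk k \<longrightarrow>
                  (g (y k j) \<notin> nonpos_orthant \<longrightarrow> L k (Suc j) = \<tau> *\<^sub>R L k j \<and> \<mu> k (Suc j) = \<mu> k j) \<and>
                  (g (y k j) \<in> nonpos_orthant \<longrightarrow> L k (Suc j) = L k j \<and> \<mu> k (Suc j) = \<tau> * \<mu> k j)"
    and x_next: "\<forall>k. x (Suc k) = y k (jk k)"
  \<comment> \<open>Assumption 2\<close>
    and A2: "\<forall>k j. j \<le> jk k \<longrightarrow>
                  metric_subregular (\<lambda>z. {Gfun g z (x k) (V k) (L k j) - w | w. w \<in> nonpos_orthant})
                    (xbar k j) 0"
  \<comment> \<open>Assumption 3\<close>
    and A3: "bounded (range x)"
  \<comment> \<open>Assumption 4\<close>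
    and A4: "\<forall>p. cluster_point (\<lambda>k. ((x k, L k (jk k), V k, \<xi> k, Q k (jk k)), xbar k (jk k))) p
                  \<longrightarrow> partial_BMP g (fst p) (snd p)"
  shows "\<exists>w. (\<lambda>k. Fobj g0 g \<phi> (x k)) \<longlonglongrightarrow> w \<and>
             (\<forall>p. cluster_point x p \<longrightarrow> stationary g0 g \<phi> p \<and> Fobj g0 g \<phi> p = w)"
  proof -
  interpret imba g0 g \<phi> Oset \<mu>min \<mu>max Lmin Lmax M \<beta>C \<beta>S \<alpha> \<tau> x \<xi> V jk \<mu> Q L y v xbar lam
    by unfold_locales (fact assms)+
  show ?thesis by (rule convergence)
qed

end
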